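(* For every colouring $\psi$, there is a unique homomorphism of $\mathfrak a$-algebras $U_h(\psi)/hU_h(\psi)\to U(\mathfrak{sl}_2)$, and it is surjective.
   Context: $\mathbb k$ is a field of characteristic zero, and $\mathbb k[[h]]$ is the ring of formal power series over $\mathbb k$. For a $\mathbb k$-vector space $V_0$, $V_0[[h]]$ denotes the module of formal series $\sum_{m\ge0}v_mh^m$ with $v_m\in V_0$. $\mathfrak a$ is the Lie algebra over $\mathbb k$ generated by $H,X^-,X^+$ subject to $[H,X^\pm]=\pm2X^\pm$. An $\mathfrak a$-algebra is a $U(\mathfrak a)$-algebra, i.e. an algebra $A$ together with a structural homomorphism $U(\mathfrak a)\to A$; homomorphisms of $\mathfrak a$-algebras commute with the structural maps. $U(\mathfrak{sl}_2)$ is an $\mathfrak a$-algebra via the canonical projection, which sends $H,X^\pm$ to the Chevalley generators; these satisfy in addition $[X^+,X^-]=H$. We set $U_h(\mathfrak a):=U(\mathfrak a)[[h]]$. Any $U_h(\mathfrak a)$-algebra $A$ makes $A/hA$ an $\mathfrak a$-algebra, via $U_h(\mathfrak a)/hU_h(\mathfrak a)\cong U(\mathfrak a)$. A colouring is a sequence $\psi=(\psi^k)_{k\ge1}$ of functions $\psi^k:\mathbb Z\to\mathbb k[[h]]$ satisfying: - (C1) $\psi^k(n)\equiv k(n-k+1)\bmod h$; - (C2) $\psi^{n+1}(n)=0$ for all $n\ge0$; - (C3) $\psi^{n+k+1}(n)=\psi^k(-n-2)$ for all $k\ge1$ and all $n\ge0$. $V_h(n,\psi)$ is the representation of $U_h(\mathfrak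 a)$ on $(\bigoplus_{k\ge0}\mathbb k b_k)[[h]]$ with the following action: - $H.b_k=(n-2k)b_k$; - $X^-.b_k=b_{k+1}$; - $X^+.b_0=0$, and $X^+.b_k=\psi^k(n)b_{k-1}$ for $k\ge1$. $U_h(\psi)$ is the quotient of $U_h(\mathfrak a)$ by the two-sided ideal of elements that act by zero on $V_h(n,\psi)$ for every $n\in\mathbb Z$. It is a $U_h(\mathfrak a)$-algebra via the projection map. *)

theory Defs
  imports "HOL-Algebra.QuotRing" "HOL-Algebra.RingHom"
          "HOL-Computational_Algebra.Formal_Power_Series"
begin

datatype gen = GH | GXm | GXp

text \<open>Elements of the free algebra: finitely supported functions on words.
  A word [g1,...,gr] stands for the monomial g1 g2 ... gr.\<close>

definition free_alg :: "(gen list \<Rightarrow> 'k::field) ring" where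
  "free_alg = \<lparr> carrier = {f. finite {w. f w \<noteq> 0}},
      monoid.mult = (\<lambda>f g w. \<Sum>i\<le>length w. f (take i w) * g (drop i w)),
      one = (\<lambda>w. if w = [] then 1 else 0),
      zero = (\<lambda>w. 0),
      add = (\<lambda>f g w. f w + g w) \<rparr>"

definition word_el :: "gen list \<Rightarrow> gen list \<Rightarrow> 'k::field" where
  "word_el u = (\<lambda>w. if w = u then 1 else 0)"

definition rel_Hp :: "gen list \<Rightarrow> 'k::field" where
  "rel_Hp = (\<lambda>w. word_el [GH, GXp] w - word_el [GXp, GH] w - 2 * word_el [GXp] w)"

definition rel_Hm :: "gen list \<Rightarrow> 'k::field" where
  "rel_Hm = (\<lambda>w. word_el [GH, GXm] w - word_el [GXm, GH] w + 2 * word_el [GXm] w)"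

definition rel_pm :: "gen list \<Rightarrow> 'k::field" where
  "rel_pm = (\<lambda>w. word_el [GXp, GXm] w - word_el [GXm, GXp] w - word_el [GH] w)"

definition ideal_a :: "(gen list \<Rightarrow> 'k::field) set" where
  "ideal_a = genideal free_alg {rel_Hp, rel_Hm}"

definition ideal_sl2 :: "(gen list \<Rightarrow> 'k::field) set" where
  "ideal_sl2 = genideal free_alg {rel_Hp, rel_Hm, rel_pm}"

definition U_a :: "(gen list \<Rightarrow> 'k::field) set ring" where
  "U_a = free_alg Quot ideal_a"

definition U_sl2 :: "(gen list \<Rightarrow> 'k::field) set ring" where
  "U_sl2 = free_alg Quot ideal_sl2"

definition str_sl2 :: "(gen list \<Rightarrow> 'k::field) set \<Rightarrow> (gen list \<Rightarrow> 'k) set" where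
  "str_sl2 C = a_r_coset free_alg ideal_sl2 (SOME x. x \<in> C)"

definition series_ring :: "('a, 'b) ring_scheme \<Rightarrow> (nat \<Rightarrow> 'a) ring" where
  "series_ring R = \<lparr> carrier = {f. \<forall>n. f n \<in> carrier R},
      monoid.mult = (\<lambda>f g n. finsum R (\<lambda>i. f i \<otimes>\<^bsub>R\<^esub> g (n - i)) {..n}),
      one = (\<lambda>n. if n = 0 then \<one>\<^bsub>R\<^esub> else \<zero>\<^bsub>R\<^esub>),
      zero = (\<lambda>n. \<zero>\<^bsub>R\<^esub>),
      add = (\<lambda>f g n. f n \<oplus>\<^bsub>R\<^esub> g n) \<rparr>"

definition U_h_a :: "(nat \<Rightarrow> (gen list \<Rightarrow> 'k::field) set) ring" where
  "U_h_a = series_ring U_a"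

definition h_el :: "nat \<Rightarrow> (gen list \<Rightarrow> 'k::field) set" where
  "h_el = (\<lambda>m. if m = 1 then \<one>\<^bsub>U_a\<^esub> else \<zero>\<^bsub>U_a\<^esub>)"

definition colouring :: "(nat \<Rightarrow> int \<Rightarrow> 'k::field_char_0 fps) \<Rightarrow> bool" where
  "colouring \<psi> \<longleftrightarrow>
     (\<forall>k\<ge>1. \<forall>n. fps_nth (\<psi> k n) 0 = of_int (int k * (n - int k + 1))) \<and>
     (\<forall>n::nat. \<psi> (n + 1) (int n) = 0) \<and>
     (\<forall>k\<ge>1. \<forall>n::nat. \<psi> (n + k + 1) (int n) = \<psi> k (- int n - 2))"

text \<open>A vector of V_h(n,psi) = (\<Oplus>_k k b_k)[[h]] is represented by v with
  v m k = coefficient of h^m b_k; each h-coefficient is finitely supported.\<close>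

definition Vh_carrier :: "(nat \<Rightarrow> nat \<Rightarrow> 'k::field) set" where
  "Vh_carrier = {v. \<forall>m. finite {k. v m k \<noteq> 0}}"

fun gen_op :: "(nat \<Rightarrow> int \<Rightarrow> 'k::field_char_0 fps) \<Rightarrow> int \<Rightarrow> gen
                 \<Rightarrow> (nat \<Rightarrow> nat \<Rightarrow> 'k) \<Rightarrow> (nat \<Rightarrow> nat \<Rightarrow> 'k)" where
  "gen_op \<psi> n GH v = (\<lambda>m k. of_int (n - 2 * int k) * v m k)"
| "gen_op \<psi> n GXm v = (\<lambda>m k. if k = 0 then 0 else v m (k - 1))"
| "gen_op \<psi> n GXp v = (\<lambda>m k. \<Sum>i\<le>m. fps_nth (\<psi> (k + 1) n) i * v (m - i) (k + 1))"

definition word_op :: "(nat \<Rightarrow> int \<Rightarrow> 'k::field_char_0 fps) \<Rightarrow> int \<Rightarrow> gen list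
                 \<Rightarrow> (nat \<Rightarrow> nat \<Rightarrow> 'k) \<Rightarrow> (nat \<Rightarrow> nat \<Rightarrow> 'k)" where
  "word_op \<psi> n w = foldr (\<lambda>g acc. gen_op \<psi> n g \<circ> acc) w id"

definition fa_op :: "(nat \<Rightarrow> int \<Rightarrow> 'k::field_char_0 fps) \<Rightarrow> int \<Rightarrow> (gen list \<Rightarrow> 'k)
                 \<Rightarrow> (nat \<Rightarrow> nat \<Rightarrow> 'k) \<Rightarrow> (nat \<Rightarrow> nat \<Rightarrow> 'k)" where
  "fa_op \<psi> n f v = (\<lambda>m k. \<Sum>w\<in>{w. f w \<noteq> 0}. f w * word_op \<psi> n w v m k)"

definition ser_op :: "(nat \<Rightarrow> int \<Rightarrow> 'k::field_char_0 fps) \<Rightarrow> int \<Rightarrow> (nat \<Rightarrow> gen list \<Rightarrow> 'k)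
                 \<Rightarrow> (nat \<Rightarrow> nat \<Rightarrow> 'k) \<Rightarrow> (nat \<Rightarrow> nat \<Rightarrow> 'k)" where
  "ser_op \<psi> n s v = (\<lambda>m k. \<Sum>j\<le>m. fa_op \<psi> n (s j) v (m - j) k)"

text \<open>Action of u \<in> U_h(a) = U(a)[[h]] on V_h(n,psi), via representatives of the
  cosets u j \<in> U(a) (independent of the choice, as the relations of U(a) act by zero).\<close>

definition Uh_op :: "(nat \<Rightarrow> int \<Rightarrow> 'k::field_char_0 fps) \<Rightarrow> int \<Rightarrow> (nat \<Rightarrow> (gen list \<Rightarrow> 'k) set)
                 \<Rightarrow> (nat \<Rightarrow> nat \<Rightarrow> 'k) \<Rightarrow> (nat \<Rightarrow> nat \<Rightarrow> 'k)" where
  "Uh_op \<psi> n u = ser_op \<psi> n (\<lambda>j. SOME f. f \<in> u j)"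

definition ann :: "(nat \<Rightarrow> int \<Rightarrow> 'k::field_char_0 fps) \<Rightarrow> (nat \<Rightarrow> (gen list \<Rightarrow> 'k) set) set" where
  "ann \<psi> = {u \<in> carrier U_h_a. \<forall>n. \<forall>v\<in>Vh_carrier. Uh_op \<psi> n u v = (\<lambda>m k. 0)}"

definition U_h_psi :: "(nat \<Rightarrow> int \<Rightarrow> 'k::field_char_0 fps)
                        \<Rightarrow> (nat \<Rightarrow> (gen list \<Rightarrow> 'k) set) set ring" where
  "U_h_psi \<psi> = U_h_a Quot ann \<psi>"

definition proj_psi :: "(nat \<Rightarrow> int \<Rightarrow> 'k::field_char_0 fps) \<Rightarrow> (nat \<Rightarrow> (gen list \<Rightarrow> 'k) set)
                         \<Rightarrow> (nat \<Rightarrow> (gen list \<Rightarrow> 'k) set) set" where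
  "proj_psi \<psi> u = a_r_coset U_h_a (ann \<psi>) u"

definition hU_h_psi :: "(nat \<Rightarrow> int \<Rightarrow> 'k::field_char_0 fps)
                         \<Rightarrow> (nat \<Rightarrow> (gen list \<Rightarrow> 'k) set) set set" where
  "hU_h_psi \<psi> = {proj_psi \<psi> h_el \<otimes>\<^bsub>U_h_psi \<psi>\<^esub> x | x. x \<in> carrier (U_h_psi \<psi>)}"

definition U_h_psi_mod_h :: "(nat \<Rightarrow> int \<Rightarrow> 'k::field_char_0 fps)
                         \<Rightarrow> (nat \<Rightarrow> (gen list \<Rightarrow> 'k) set) set set ring" where
  "U_h_psi_mod_h \<psi> = U_h_psi \<psi> Quot hU_h_psi \<psi>"

text \<open>Structural map U(a) \<cong> U_h(a)/hU_h(a) -> U_h(psi)/hU_h(psi): a \<mapsto> class of the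
  constant series a.\<close>

definition str_mod_h :: "(nat \<Rightarrow> int \<Rightarrow> 'k::field_char_0 fps) \<Rightarrow> (gen list \<Rightarrow> 'k) set
                          \<Rightarrow> (nat \<Rightarrow> (gen list \<Rightarrow> 'k) set) set set" where
  "str_mod_h \<psi> a = a_r_coset (U_h_psi \<psi>) (hU_h_psi \<psi>)
                     (proj_psi \<psi> (\<lambda>m. if m = 0 then a else \<zero>\<^bsub>U_a\<^esub>))"

definition a_alg_hom ::
  "('a, 'c) ring_scheme \<Rightarrow> ((gen list \<Rightarrow> 'k::field) set \<Rightarrow> 'a)
   \<Rightarrow> ('b, 'd) ring_scheme \<Rightarrow> ((gen list \<Rightarrow> 'k) set \<Rightarrow> 'b) \<Rightarrow> ('a \<Rightarrow> 'b) \<Rightarrow> bool" where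
  "a_alg_hom A sA B sB \<phi> \<longleftrightarrow> \<phi> \<in> ring_hom A B \<and> (\<forall>x\<in>carrier U_a. \<phi> (sA x) = sB x)"

end

theory Submission
  imports Defs "HOL-Algebra.UnivPoly" "HOL-Computational_Algebra.Polynomial"
begin

text \<open>The map U_h(a) \<rightarrow> U(sl2), u \<mapsto> [u_0], kills h, and it kills every element acting by zero on
  all V_h(n,psi): the constant term of such an element acts by zero on each reduction
  V(n) = V_h(n,psi)/h, where X+ b_k = k(n-k+1) b_(k-1) by (C1), and an element of U(a) acting trivially on every V(n) already vanishes in U(sl2).
  For the latter, reduce it modulo [X+,X-] - H to a combination of PBW monomials
  (X-)^a H^b (X+)^c; evaluated on the basis vector b_j, with j the least exponent c that occurs,
  the coefficient of b_a is a nonzero multiple of a polynomial in n, which vanishes for all large n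
  only if its coefficients do. The map therefore descends to U_h(psi)/hU_h(psi). Uniqueness and
  surjectivity hold because every element of U_h(psi)/hU_h(psi) is the class of an element of
  U(a), and U(a) maps onto U(sl2).\<close>

lemma idealI_closed:
  fixes R (structure)
  assumes R: "ring R" and sub: "I \<subseteq> carrier R" and z: "\<zero> \<in> I"
    and add: "\<And>a b. a \<in> I \<Longrightarrow> b \<in> I \<Longrightarrow> a \<oplus> b \<in> I"
    and neg: "\<And>a. a \<in> I \<Longrightarrow> \<ominus> a \<in> I"
    and l: "\<And>a x. a \<in> I \<Longrightarrow> x \<in> carrier R \<Longrightarrow> x \<otimes> a \<in> I"
    and r: "\<And>a x. a \<in> I \<Longrightarrow> x \<in> carrier R \<Longrightarrow> a \<otimes> x \<in> I"
  shows "ideal I R"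
proof (rule idealI[OF R])
  interpret ring R by fact
  show "subgroup I (add_monoid R)"
    by (rule subgroup.intro) (auto simp: sub z add neg a_inv_def[symmetric])
qed (auto intro: l r)

lemma (in ring) ideal_central_multiples:
  assumes p: "p \<in> carrier R" and central: "\<And>x. x \<in> carrier R \<Longrightarrow> p \<otimes> x = x \<otimes> p"
  shows "ideal {p \<otimes> x | x. x \<in> carrier R} R"
proof (rule idealI_closed[OF ring_axioms])
  fix a x assume "a \<in> {p \<otimes> x | x. x \<in> carrier R}" and x: "x \<in> carrier R"
  then obtain y where y: "a = p \<otimes> y" "y \<in> carrier R" by blast
  have "x \<otimes> a = p \<otimes> (x \<otimes> y)"
    using y x p central[OF x] by (metis m_assoc)
  then show "x \<otimes> a \<in> {p \<otimes> x | x. x \<in> carrier R}" using x y by blast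
  have "a \<otimes> x = p \<otimes> (y \<otimes> x)" using y x p by (simp add: m_assoc)
  then show "a \<otimes> x \<in> {p \<otimes> x | x. x \<in> carrier R}" using x y by blast
next
  show "\<zero> \<in> {p \<otimes> x | x. x \<in> carrier R}" using p by (intro CollectI exI[of _ \<zero>]) simp
next
  fix a b assume "a \<in> {p \<otimes> x | x. x \<in> carrier R}" "b \<in> {p \<otimes> x | x. x \<in> carrier R}"
  then show "a \<oplus> b \<in> {p \<otimes> x | x. x \<in> carrier R}"
    using p by (auto simp: r_distr[symmetric])
next
  fix a assume "a \<in> {p \<otimes> x | x. x \<in> carrier R}"
  then show "\<ominus> a \<in> {p \<otimes> x | x. x \<in> carrier R}"
    using p by (auto simp: r_minus[symmetric])
qed (use p in auto)

lemma (in ideal) a_rcos_add_mem: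
  assumes "a \<in> carrier R" "i \<in> I"
  shows "I +> (a \<oplus> i) = I +> a"
proof -
  have "a \<oplus> i = i \<oplus> a" using assms a_Hcarr by (simp add: a_comm)
  then have "a \<oplus> i \<in> I +> a" using assms by (auto simp: a_r_coset_def r_coset_def)
  then show ?thesis using assms(1) by (metis a_repr_independence')
qed

lemma carrier_Quot: "carrier (R Quot I) = {I +>\<^bsub>R\<^esub> x | x. x \<in> carrier R}"
  by (auto simp: FactRing_def A_RCOSETS_def RCOSETS_def a_r_coset_def)

lemma quot_lift_eval:
  assumes R: "ring R" and S: "ring S" and I: "ideal I R" and h: "h \<in> ring_hom R S"
    and z: "\<And>i. i \<in> I \<Longrightarrow> h i = \<zero>\<^bsub>S\<^esub>" and x: "x \<in> carrier R"
  shows "the_elem (h ` (I +>\<^bsub>R\<^esub> x)) = h x"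
proof -
  interpret R: ring R by fact
  interpret S: ring S by fact
  interpret I: ideal I R by fact
  have "h ` (I +>\<^bsub>R\<^esub> x) = {h x}"
  proof
    show "h ` (I +>\<^bsub>R\<^esub> x) \<subseteq> {h x}"
    proof
      fix y assume "y \<in> h ` (I +>\<^bsub>R\<^esub> x)"
      then obtain i where i: "i \<in> I" "y = h (i \<oplus>\<^bsub>R\<^esub> x)"
        by (auto simp: a_r_coset_def r_coset_def)
      have ic: "i \<in> carrier R" using i(1) I.a_Hcarr by blast
      have "h (i \<oplus>\<^bsub>R\<^esub> x) = h i \<oplus>\<^bsub>S\<^esub> h x" by (rule ring_hom_add[OF h ic x])
      also have "\<dots> = h x" using z[OF i(1)] ring_hom_closed[OF h x] by simp
      finally show "y \<in> {h x}" using i by simp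
    qed
    show "{h x} \<subseteq> h ` (I +>\<^bsub>R\<^esub> x)"
      using I.a_rcos_self[OF x] by auto
  qed
  then show ?thesis by simp
qed

lemma quot_lift_hom:
  assumes R: "ring R" and S: "ring S" and I: "ideal I R" and h: "h \<in> ring_hom R S"
    and z: "\<And>i. i \<in> I \<Longrightarrow> h i = \<zero>\<^bsub>S\<^esub>"
  shows "(\<lambda>X. the_elem (h ` X)) \<in> ring_hom (R Quot I) S"
proof -
  interpret R: ring R by fact
  interpret S: ring S by fact
  interpret I: ideal I R by fact
  note ev = quot_lift_eval[OF R S I h z]
  show ?thesis
  proof (rule ring_hom_memI)
    fix X assume "X \<in> carrier (R Quot I)"
    then obtain x where x: "x \<in> carrier R" "X = I +>\<^bsub>R\<^esub> x" by (auto simp: carrier_Quot)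
    then show "the_elem (h ` X) \<in> carrier S" using ev ring_hom_closed[OF h] by simp
  next
    fix X Y assume "X \<in> carrier (R Quot I)" "Y \<in> carrier (R Quot I)"
    then obtain x y where x: "x \<in> carrier R" "X = I +>\<^bsub>R\<^esub> x"
      and y: "y \<in> carrier R" "Y = I +>\<^bsub>R\<^esub> y" by (auto simp: carrier_Quot)
    have "X \<otimes>\<^bsub>R Quot I\<^esub> Y = I +>\<^bsub>R\<^esub> (x \<otimes>\<^bsub>R\<^esub> y)"
      using x y by (simp add: FactRing_def I.rcoset_mult_add)
    then show "the_elem (h ` (X \<otimes>\<^bsub>R Quot I\<^esub> Y)) = the_elem (h ` X) \<otimes>\<^bsub>S\<^esub> the_elem (h ` Y)"
      using x y ev ring_hom_mult[OF h] by simp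
    have "X \<oplus>\<^bsub>R Quot I\<^esub> Y = I +>\<^bsub>R\<^esub> (x \<oplus>\<^bsub>R\<^esub> y)"
      using x y by (simp add: FactRing_def I.a_rcos_sum)
    then show "the_elem (h ` (X \<oplus>\<^bsub>R Quot I\<^esub> Y)) = the_elem (h ` X) \<oplus>\<^bsub>S\<^esub> the_elem (h ` Y)"
      using x y ev ring_hom_add[OF h] by simp
  next
    have "\<one>\<^bsub>R Quot I\<^esub> = I +>\<^bsub>R\<^esub> \<one>\<^bsub>R\<^esub>" by (simp add: FactRing_def)
    then show "the_elem (h ` \<one>\<^bsub>R Quot I\<^esub>) = \<one>\<^bsub>S\<^esub>"
      using ev ring_hom_one[OF h] by simp
  qed
qed

context abelian_monoid
begin

lemma finsum_diagonal_reindex: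
  fixes j :: nat and F :: "nat \<Rightarrow> nat \<Rightarrow> 'a"
  assumes F: "\<And>i j. F i j \<in> carrier G"
  shows "(\<Oplus>k\<in>{..j}. \<Oplus>i\<in>{..k}. F i (k - i)) = (\<Oplus>k\<in>{..j}. \<Oplus>i\<in>{..j - k}. F k i)"
proof (induction j)
  case 0 then show ?case using F by (simp add: Pi_def)
next
  case (Suc j)
  have "(\<Oplus>k\<in>{..Suc j}. \<Oplus>i\<in>{..Suc j - k}. F k i)
      = (\<Oplus>k\<in>{..j}. \<Oplus>i\<in>{..Suc (j - k)}. F k i) \<oplus> (\<Oplus>i\<in>{..0}. F (Suc j) i)"
    using F by (simp add: finsum_Suc Pi_def a_comm Suc_diff_le cong: finsum_cong)
  also have "(\<Oplus>k\<in>{..j}. \<Oplus>i\<in>{..Suc (j - k)}. F k i)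
      = (\<Oplus>k\<in>{..j}. F k (Suc (j - k)) \<oplus> (\<Oplus>i\<in>{..j - k}. F k i))"
    using F by (intro finsum_cong) (auto simp: finsum_Suc Pi_def)
  also have "\<dots> = (\<Oplus>k\<in>{..j}. F k (Suc j - k)) \<oplus> (\<Oplus>k\<in>{..j}. \<Oplus>i\<in>{..j - k}. F k i)"
    using F by (simp add: finsum_addf Pi_def Suc_diff_le cong: finsum_cong)
  finally have R: "(\<Oplus>k\<in>{..Suc j}. \<Oplus>i\<in>{..Suc j - k}. F k i)
     = (\<Oplus>k\<in>{..j}. F k (Suc j - k)) \<oplus> (\<Oplus>k\<in>{..j}. \<Oplus>i\<in>{..j - k}. F k i) \<oplus> F (Suc j) 0"
    using F by simp
  have "(\<Oplus>k\<in>{..Suc j}. \<Oplus>i\<in>{..k}. F i (k - i))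
      = (\<Oplus>i\<in>{..Suc j}. F i (Suc j - i)) \<oplus> (\<Oplus>k\<in>{..j}. \<Oplus>i\<in>{..k}. F i (k - i))"
    using F by (simp add: finsum_Suc Pi_def)
  also have "(\<Oplus>i\<in>{..Suc j}. F i (Suc j - i)) = F (Suc j) 0 \<oplus> (\<Oplus>i\<in>{..j}. F i (Suc j - i))"
    using F by (simp add: finsum_Suc Pi_def)
  finally show ?case using Suc R F by (simp add: a_ac Pi_def finsum_closed)
qed

end

context ring
begin

lemma series_ring_carrier: "x \<in> carrier (series_ring R) \<longleftrightarrow> (\<forall>n. x n \<in> carrier R)"
  by (simp add: series_ring_def)

lemma series_mult_assoc:
  assumes x: "x \<in> carrier (series_ring R)" and y: "y \<in> carrier (series_ring R)"
    and z: "z \<in> carrier (series_ring R)"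
  shows "x \<otimes>\<^bsub>series_ring R\<^esub> y \<otimes>\<^bsub>series_ring R\<^esub> z = x \<otimes>\<^bsub>series_ring R\<^esub> (y \<otimes>\<^bsub>series_ring R\<^esub> z)"
proof
  fix n
  have xc: "\<And>n. x n \<in> carrier R" and yc: "\<And>n. y n \<in> carrier R" and zc: "\<And>n. z n \<in> carrier R"
    using x y z by (auto simp: series_ring_carrier)
  let ?F = "\<lambda>i l. x i \<otimes> y l \<otimes> z (n - i - l)"
  have "(x \<otimes>\<^bsub>series_ring R\<^esub> y \<otimes>\<^bsub>series_ring R\<^esub> z) n
      = (\<Oplus>k\<in>{..n}. (\<Oplus>i\<in>{..k}. x i \<otimes> y (k - i)) \<otimes> z (n - k))"
    by (simp add: series_ring_def)
  also have "\<dots> = (\<Oplus>k\<in>{..n}. \<Oplus>i\<in>{..k}. ?F i (k - i))"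
  proof -
    have "(\<Oplus>i\<in>{..k}. x i \<otimes> y (k - i)) \<otimes> z (n - k) = (\<Oplus>i\<in>{..k}. ?F i (k - i))"
      if "k \<le> n" for k
    proof -
      have "(\<Oplus>i\<in>{..k}. x i \<otimes> y (k - i)) \<otimes> z (n - k) = (\<Oplus>i\<in>{..k}. x i \<otimes> y (k - i) \<otimes> z (n - k))"
        using xc yc zc by (subst finsum_ldistr) (auto simp: Pi_def)
      also have "\<dots> = (\<Oplus>i\<in>{..k}. ?F i (k - i))"
        using that xc yc zc by (intro finsum_cong) (auto simp: Pi_def)
      finally show ?thesis .
    qed
    then show ?thesis using xc yc zc by (intro finsum_cong) (auto simp: Pi_def)
  qed
  also have "\<dots> = (\<Oplus>k\<in>{..n}. \<Oplus>i\<in>{..n - k}. ?F k i)"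
    using xc yc zc by (intro finsum_diagonal_reindex) simp
  also have "\<dots> = (\<Oplus>k\<in>{..n}. x k \<otimes> (\<Oplus>i\<in>{..n - k}. y i \<otimes> z (n - k - i)))"
    using xc yc zc by (intro finsum_cong) (auto simp: finsum_rdistr Pi_def m_assoc)
  also have "\<dots> = (x \<otimes>\<^bsub>series_ring R\<^esub> (y \<otimes>\<^bsub>series_ring R\<^esub> z)) n"
    by (simp add: series_ring_def)
  finally show "(x \<otimes>\<^bsub>series_ring R\<^esub> y \<otimes>\<^bsub>series_ring R\<^esub> z) n
      = (x \<otimes>\<^bsub>series_ring R\<^esub> (y \<otimes>\<^bsub>series_ring R\<^esub> z)) n" .
qed

lemma series_one_mult:
  assumes x: "x \<in> carrier (series_ring R)"
  shows "\<one>\<^bsub>series_ring R\<^esub> \<otimes>\<^bsub>series_ring R\<^esub> x = x"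
    and "x \<otimes>\<^bsub>series_ring R\<^esub> \<one>\<^bsub>series_ring R\<^esub> = x"
proof -
  have xc: "\<And>n. x n \<in> carrier R" using x by (auto simp: series_ring_carrier)
  have "(\<Oplus>i\<in>{..n}. (if i = 0 then \<one> else \<zero>) \<otimes> x (n - i)) = x n" for n
  proof -
    have "(if i = 0 then \<one> else \<zero>) \<otimes> x (n - i) = (if 0 = i then x (n - i) else \<zero>)" for i
      using xc by simp
    then have "(\<Oplus>i\<in>{..n}. (if i = 0 then \<one> else \<zero>) \<otimes> x (n - i))
        = (\<Oplus>i\<in>{..n}. if 0 = i then x (n - i) else \<zero>)"
      by presburger
    also have "\<dots> = x n" using xc by (subst finsum_singleton) (auto simp: Pi_def)
    finally show ?thesis .
  qed
  then show "\<one>\<^bsub>series_ring R\<^esub> \<otimes>\<^bsub>series_ring R\<^esub> x = x"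
    by (simp add: series_ring_def fun_eq_iff)
  have "(\<Oplus>i\<in>{..n}. x i \<otimes> (if n - i = 0 then \<one> else \<zero>)) = x n" for n
  proof -
    have "i \<in> {..n} \<Longrightarrow> x i \<otimes> (if n - i = 0 then \<one> else \<zero>) = (if n = i then x i else \<zero>)" for i
      using xc by auto
    then have "(\<Oplus>i\<in>{..n}. x i \<otimes> (if n - i = 0 then \<one> else \<zero>))
        = (\<Oplus>i\<in>{..n}. if n = i then x i else \<zero>)"
      using xc by (intro finsum_cong) (auto simp: Pi_def)
    also have "\<dots> = x n" using xc by (subst finsum_singleton) (auto simp: Pi_def)
    finally show ?thesis .
  qed
  then show "x \<otimes>\<^bsub>series_ring R\<^esub> \<one>\<^bsub>series_ring R\<^esub> = x"
    by (simp add: series_ring_def fun_eq_iff)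
qed

lemma ring_series_ring: "ring (series_ring R)"
proof (rule ringI)
  show "abelian_group (series_ring R)"
  proof (rule abelian_groupI)
    fix x assume "x \<in> carrier (series_ring R)"
    then show "\<exists>y\<in>carrier (series_ring R). y \<oplus>\<^bsub>series_ring R\<^esub> x = \<zero>\<^bsub>series_ring R\<^esub>"
      by (intro bexI[of _ "\<lambda>n. \<ominus> x n"]) (auto simp: series_ring_def l_neg)
  qed (auto simp: series_ring_def a_ac)
  show "Group.monoid (series_ring R)"
  proof (rule monoidI)
    fix x y assume "x \<in> carrier (series_ring R)" "y \<in> carrier (series_ring R)"
    then show "x \<otimes>\<^bsub>series_ring R\<^esub> y \<in> carrier (series_ring R)"
      by (auto simp: series_ring_def Pi_def intro!: finsum_closed)
  qed (simp_all add: series_mult_assoc series_one_mult, simp add: series_ring_def)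
next
  fix x y z assume "x \<in> carrier (series_ring R)" "y \<in> carrier (series_ring R)"
    "z \<in> carrier (series_ring R)"
  then have xc: "\<And>n. x n \<in> carrier R" and yc: "\<And>n. y n \<in> carrier R" and zc: "\<And>n. z n \<in> carrier R"
    by (auto simp: series_ring_carrier)
  show "(x \<oplus>\<^bsub>series_ring R\<^esub> y) \<otimes>\<^bsub>series_ring R\<^esub> z = x \<otimes>\<^bsub>series_ring R\<^esub> z \<oplus>\<^bsub>series_ring R\<^esub> y \<otimes>\<^bsub>series_ring R\<^esub> z"
    using xc yc zc by (simp add: series_ring_def fun_eq_iff l_distr finsum_addf Pi_def finsum_ldistr)
  show "z \<otimes>\<^bsub>series_ring R\<^esub> (x \<oplus>\<^bsub>series_ring R\<^esub> y) = z \<otimes>\<^bsub>series_ring R\<^esub> x \<oplus>\<^bsub>series_ring R\<^esub> z \<otimes>\<^bsub>series_ring R\<^esub> y"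
    using xc yc zc by (simp add: series_ring_def fun_eq_iff r_distr finsum_addf Pi_def finsum_rdistr)
qed

end

lemma coeff_zero_if_vanishes_on_int_ray:
  fixes d :: "nat \<Rightarrow> 'k::field_char_0"
  assumes B: "finite B" and Z: "\<And>n::int. n \<ge> N \<Longrightarrow> (\<Sum>b\<in>B. d b * of_int n ^ b) = 0" and b0: "b0 \<in> B"
  shows "d b0 = 0"
proof -
  let ?p = "\<Sum>b\<in>B. monom (d b) b"
  have ev: "poly ?p x = (\<Sum>b\<in>B. d b * x ^ b)" for x
    by (simp add: poly_sum poly_monom)
  have "?p = 0"
  proof (rule ccontr)
    assume "?p \<noteq> 0"
    then have fin: "finite {x. poly ?p x = 0}" by (rule poly_roots_finite)
    have "of_int ` {N..} \<subseteq> {x. poly ?p x = 0}" using Z by (auto simp: ev)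
    moreover have "infinite (of_int ` {N..} :: 'k set)"
    proof
      assume "finite (of_int ` {N..} :: 'k set)"
      moreover have "inj_on (of_int :: int \<Rightarrow> 'k) {N..}" by (simp add: inj_on_def)
      ultimately have "finite {N..}" using finite_imageD by blast
      then show False by (simp add: infinite_Ici)
    qed
    ultimately show False using fin finite_subset by blast
  qed
  then have "coeff ?p b0 = 0" by simp
  moreover have "coeff ?p b0 = d b0"
    using B b0 by (simp add: coeff_sum)
  ultimately show ?thesis by simp
qed

section \<open>The free algebra\<close>

definition fsupp :: "(gen list \<Rightarrow> 'k::field) \<Rightarrow> gen list set" where
  "fsupp f = {w. f w \<noteq> 0}"

definition splits :: "'a list \<Rightarrow> ('a list \<times> 'a list) set" where
  "splits w = {(a,b). a @ b = w}"

lemma splits_take_drop: "splits w = (\<lambda>i. (take i w, drop i w)) ` {..length w}"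
proof -
  have "(a, b) \<in> (\<lambda>i. (take i w, drop i w)) ` {..length w}" if "a @ b = w" for a b
    using that by (intro image_eqI[of _ _ "length a"]) auto
  then show ?thesis unfolding splits_def by auto
qed

lemma finite_splits[simp]: "finite (splits w)"
  by (simp add: splits_take_drop)

lemma sum_take_drop_splits: "(\<Sum>i\<le>length w. F (take i w) (drop i w)) = (\<Sum>(a,b)\<in>splits w. F a b)"
proof -
  have "inj_on (\<lambda>i. (take i w, drop i w)) {..length w}"
    by (rule inj_onI) (metis (no_types) Pair_inject atMost_iff length_take min.absorb2)
  then show ?thesis by (simp add: splits_take_drop sum.reindex)
qed

lemma fa_carrier: "carrier free_alg = {f. finite (fsupp f)}"
  by (simp add: free_alg_def fsupp_def)

lemma fa_mult: "f \<otimes>\<^bsub>free_alg\<^esub> g = (\<lambda>w. \<Sum>(a,b)\<in>splits w. f a * g b)"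
proof (rule ext)
  fix w show "(f \<otimes>\<^bsub>free_alg\<^esub> g) w = (\<Sum>(a,b)\<in>splits w. f a * g b)"
    using sum_take_drop_splits[of "\<lambda>a b. f a * g b" w] by (simp add: free_alg_def)
qed

lemma fa_add: "f \<oplus>\<^bsub>free_alg\<^esub> g = (\<lambda>w. f w + g w)"
  by (simp add: free_alg_def)

lemma fa_zero: "\<zero>\<^bsub>free_alg\<^esub> = (\<lambda>w. 0)"
  by (simp add: free_alg_def)

lemma fa_one: "\<one>\<^bsub>free_alg\<^esub> = (\<lambda>w. if w = [] then 1 else 0)"
  by (simp add: free_alg_def)

lemma fsupp_mult: "fsupp (\<lambda>w. \<Sum>(a,b)\<in>splits w. (f a::'k::field) * g b)
   \<subseteq> (\<lambda>(a,b). a @ b) ` (fsupp f \<times> fsupp g)"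
proof
  fix w assume "w \<in> fsupp (\<lambda>w. \<Sum>(a,b)\<in>splits w. f a * g b)"
  then have "(\<Sum>(a,b)\<in>splits w. f a * g b) \<noteq> 0" by (simp add: fsupp_def)
  then obtain p where "p \<in> splits w" "f (fst p) * g (snd p) \<noteq> 0"
    by (metis (no_types, lifting) case_prod_beta sum.neutral)
  then show "w \<in> (\<lambda>(a,b). a @ b) ` (fsupp f \<times> fsupp g)"
    by (auto simp: fsupp_def splits_def intro!: image_eqI[of _ _ p])
qed

lemma sum_splits_nested_left:
  "(\<Sum>(x,c)\<in>splits w. (\<Sum>(a,b)\<in>splits x. F a b c)) = (\<Sum>(a,b,c)\<in>{(a,b,c). a @ b @ c = w}. F a b c)"
proof -
  have "(\<Sum>(x,c)\<in>splits w. (\<Sum>(a,b)\<in>splits x. F a b c))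
      = (\<Sum>p\<in>splits w. (\<Sum>q\<in>splits (fst p). F (fst q) (snd q) (snd p)))"
    by (simp add: case_prod_beta)
  also have "\<dots> = (\<Sum>(p,q)\<in>Sigma (splits w) (\<lambda>p. splits (fst p)). F (fst q) (snd q) (snd p))"
    by (rule sum.Sigma) auto
  also have "\<dots> = (\<Sum>(a,b,c)\<in>{(a,b,c). a @ b @ c = w}. F a b c)"
    by (rule sum.reindex_bij_witness[where j="\<lambda>((x,c),(a,b)). (a,b,c)"
          and i="\<lambda>(a,b,c). ((a@b,c),(a,b))"]) (auto simp: splits_def)
  finally show ?thesis .
qed

lemma sum_splits_nested_right:
  "(\<Sum>(a,y)\<in>splits w. (\<Sum>(b,c)\<in>splits y. F a b c)) = (\<Sum>(a,b,c)\<in>{(a,b,c). a @ b @ c = w}. F a b c)"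
proof -
  have "(\<Sum>(a,y)\<in>splits w. (\<Sum>(b,c)\<in>splits y. F a b c))
      = (\<Sum>p\<in>splits w. (\<Sum>q\<in>splits (snd p). F (fst p) (fst q) (snd q)))"
    by (simp add: case_prod_beta)
  also have "\<dots> = (\<Sum>(p,q)\<in>Sigma (splits w) (\<lambda>p. splits (snd p)). F (fst p) (fst q) (snd q))"
    by (rule sum.Sigma) auto
  also have "\<dots> = (\<Sum>(a,b,c)\<in>{(a,b,c). a @ b @ c = w}. F a b c)"
    by (rule sum.reindex_bij_witness[where j="\<lambda>((a,y),(b,c)). (a,b,c)"
          and i="\<lambda>(a,b,c). ((a,b@c),(b,c))"]) (auto simp: splits_def)
  finally show ?thesis .
qed

lemma fa_mult_closed:
  assumes "f \<in> carrier free_alg" "g \<in> carrier free_alg"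
  shows "f \<otimes>\<^bsub>free_alg\<^esub> g \<in> carrier free_alg"
  using assms fsupp_mult[of f g] by (auto simp: fa_carrier fa_mult intro: finite_subset)

lemma sum_splits_delta_left:
  "(\<Sum>(a,b)\<in>splits w. (if a = [] then 1 else 0) * (f b::'k::field)) = f w"
proof -
  have "(\<Sum>(a,b)\<in>splits w. (if a = [] then 1 else 0) * f b)
     = (\<Sum>p\<in>splits w. if p = ([], w) then f w else 0)"
    by (rule sum.cong) (auto simp: splits_def split: if_splits)
  also have "\<dots> = f w" by (simp only: sum.delta[OF finite_splits]) (simp add: splits_def)
  finally show ?thesis .
qed

lemma sum_splits_delta_right:
  "(\<Sum>(a,b)\<in>splits w. (f a::'k::field) * (if b = [] then 1 else 0)) = f w"
proof -
  have "(\<Sum>(a,b)\<in>splits w. f a * (if b = [] then 1 else 0))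
     = (\<Sum>p\<in>splits w. if p = (w, []) then f w else 0)"
    by (rule sum.cong) (auto simp: splits_def split: if_splits)
  also have "\<dots> = f w" by (simp only: sum.delta[OF finite_splits]) (simp add: splits_def)
  finally show ?thesis .
qed

lemma fa_mult_assoc:
  "x \<otimes>\<^bsub>free_alg\<^esub> y \<otimes>\<^bsub>free_alg\<^esub> z = x \<otimes>\<^bsub>free_alg\<^esub> (y \<otimes>\<^bsub>free_alg\<^esub> (z :: gen list \<Rightarrow> 'k::field))"
proof
  fix w
  have "(x \<otimes>\<^bsub>free_alg\<^esub> y \<otimes>\<^bsub>free_alg\<^esub> z) w
      = (\<Sum>(u,c)\<in>splits w. (\<Sum>(a,b)\<in>splits u. x a * y b * z c))"
    by (simp add: fa_mult sum_distrib_right case_prod_beta)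
  also have "\<dots> = (\<Sum>(a,b,c)\<in>{(a,b,c). a @ b @ c = w}. x a * y b * z c)"
    by (rule sum_splits_nested_left)
  also have "\<dots> = (\<Sum>(a,u)\<in>splits w. (\<Sum>(b,c)\<in>splits u. x a * y b * z c))"
    by (rule sum_splits_nested_right[symmetric])
  also have "\<dots> = (x \<otimes>\<^bsub>free_alg\<^esub> (y \<otimes>\<^bsub>free_alg\<^esub> z)) w"
    by (simp add: fa_mult sum_distrib_left case_prod_beta mult.assoc)
  finally show "(x \<otimes>\<^bsub>free_alg\<^esub> y \<otimes>\<^bsub>free_alg\<^esub> z) w = (x \<otimes>\<^bsub>free_alg\<^esub> (y \<otimes>\<^bsub>free_alg\<^esub> z)) w" .
qed

lemma abelian_group_free_alg: "abelian_group (free_alg :: (gen list \<Rightarrow> 'k::field) ring)"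
proof (rule abelian_groupI)
  fix x y :: "gen list \<Rightarrow> 'k"
  assume "x \<in> carrier free_alg" "y \<in> carrier free_alg"
  then show "x \<oplus>\<^bsub>free_alg\<^esub> y \<in> carrier free_alg"
    by (auto simp: fa_carrier fa_add fsupp_def intro: finite_subset[of _ "{w. x w \<noteq> 0} \<union> {w. y w \<noteq> 0}"])
next
  fix x :: "gen list \<Rightarrow> 'k"
  assume "x \<in> carrier free_alg"
  then show "\<exists>y\<in>carrier free_alg. y \<oplus>\<^bsub>free_alg\<^esub> x = \<zero>\<^bsub>free_alg\<^esub>"
    by (intro bexI[of _ "\<lambda>w. - x w"]) (auto simp: fa_carrier fa_add fa_zero fsupp_def)
qed (auto simp: fa_carrier fa_add fa_zero fsupp_def ac_simps)

lemma monoid_free_alg: "Group.monoid (free_alg :: (gen list \<Rightarrow> 'k::field) ring)"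
proof (rule monoidI)
  have "fsupp (\<lambda>w::gen list. if w = [] then 1 else (0::'k)) \<subseteq> {[]}"
    by (auto simp: fsupp_def)
  then show "\<one>\<^bsub>free_alg\<^esub> \<in> carrier (free_alg :: (gen list \<Rightarrow> 'k::field) ring)"
    by (auto simp: fa_carrier fa_one intro: finite_subset)
next
  fix x y :: "gen list \<Rightarrow> 'k"
  assume "x \<in> carrier free_alg" "y \<in> carrier free_alg"
  then show "x \<otimes>\<^bsub>free_alg\<^esub> y \<in> carrier free_alg" by (rule fa_mult_closed)
qed (simp_all only: fa_mult_assoc, simp_all add: fa_mult fa_one
       sum_splits_delta_left sum_splits_delta_right)

lemma ring_free_alg: "ring (free_alg :: (gen list \<Rightarrow> 'k::field) ring)"
  by (rule ringI[OF abelian_group_free_alg monoid_free_alg])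
     (simp_all add: fa_mult fa_add distrib_left distrib_right sum.distrib case_prod_beta)

interpretation FA: ring "free_alg :: (gen list \<Rightarrow> 'k::field) ring"
  by (rule ring_free_alg)

lemma fa_neg: "f \<in> carrier free_alg \<Longrightarrow> \<ominus>\<^bsub>free_alg\<^esub> f = (\<lambda>w. - f w)"
  by (rule FA.minus_equality) (auto simp: fa_add fa_zero fa_carrier fsupp_def)

lemma fa_minus: "f \<in> carrier free_alg \<Longrightarrow> g \<in> carrier free_alg \<Longrightarrow>
   f \<ominus>\<^bsub>free_alg\<^esub> g = (\<lambda>w. f w - g w)"
  by (simp add: a_minus_def fa_neg fa_add)

lemma fa_carrierI: "finite {w. f w \<noteq> 0} \<Longrightarrow> f \<in> carrier free_alg"
  by (simp add: fa_carrier fsupp_def)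

lemma word_el_carrier[simp]: "(word_el u :: gen list \<Rightarrow> 'k::field) \<in> carrier free_alg"
  by (rule fa_carrierI) (auto simp: word_el_def intro: finite_subset[of _ "{u}"])

lemma fa_scale_carrier:
  "f \<in> carrier free_alg \<Longrightarrow> (\<lambda>w. a * f w) \<in> carrier free_alg"
  by (rule fa_carrierI) (auto simp: fa_carrier fsupp_def intro: finite_subset[of _ "{w. f w \<noteq> 0}"])

lemma word_el_mult: "word_el u \<otimes>\<^bsub>free_alg\<^esub> word_el v = (word_el (u @ v) :: gen list \<Rightarrow> 'k::field)"
proof (rule ext)
  fix w
  have "(\<Sum>(a,b)\<in>splits w. word_el u a * word_el v b) = (\<Sum>p\<in>splits w. if p = (u,v) then (1::'k) else 0)"
    by (rule sum.cong) (auto simp: word_el_def split: if_splits)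
  also have "\<dots> = word_el (u @ v) w"
    by (simp only: sum.delta[OF finite_splits]) (auto simp: splits_def word_el_def)
  finally show "(word_el u \<otimes>\<^bsub>free_alg\<^esub> word_el v) w = (word_el (u @ v) w :: 'k)"
    by (simp add: fa_mult)
qed

lemma fa_one_word: "\<one>\<^bsub>free_alg\<^esub> = word_el []"
  by (simp add: fa_one word_el_def fun_eq_iff)

definition fa_const :: "'k::field \<Rightarrow> gen list \<Rightarrow> 'k" where
  "fa_const c = (\<lambda>w. if w = [] then c else 0)"

lemma fa_const_carrier[simp]: "fa_const c \<in> carrier free_alg"
  by (rule fa_carrierI) (auto simp: fa_const_def intro: finite_subset[of _ "{[]}"])

lemma fa_const_mult: "fa_const c \<otimes>\<^bsub>free_alg\<^esub> f = (\<lambda>w. c * f w)"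
proof (rule ext)
  fix w
  have "(\<Sum>(a,b)\<in>splits w. fa_const c a * f b) = (\<Sum>(a,b)\<in>splits w. (if a = [] then 1 else 0) * (c * f b))"
    by (rule sum.cong) (auto simp: fa_const_def)
  then show "(fa_const c \<otimes>\<^bsub>free_alg\<^esub> f) w = c * f w"
    by (simp add: fa_mult sum_splits_delta_left[where f="\<lambda>b. c * f b"])
qed

lemma fa_mult_const: "f \<otimes>\<^bsub>free_alg\<^esub> fa_const c = (\<lambda>w. c * f w)"
proof (rule ext)
  fix w
  have "(\<Sum>(a,b)\<in>splits w. f a * fa_const c b) = (\<Sum>(a,b)\<in>splits w. (c * f a) * (if b = [] then 1 else 0))"
    by (rule sum.cong) (auto simp: fa_const_def)
  then show "(f \<otimes>\<^bsub>free_alg\<^esub> fa_const c) w = c * f w"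
    by (simp add: fa_mult sum_splits_delta_right[where f="\<lambda>b. c * f b"])
qed

lemma fa_finsum:
  assumes "finite A" "\<And>i. i \<in> A \<Longrightarrow> h i \<in> carrier free_alg"
  shows "finsum free_alg h A = (\<lambda>w. \<Sum>i\<in>A. h i w)"
  using assms
proof (induction A rule: finite_induct)
  case empty then show ?case by (simp add: fa_zero)
next
  case (insert x A)
  then have "finsum free_alg h (insert x A) = h x \<oplus>\<^bsub>free_alg\<^esub> finsum free_alg h A"
    by (intro FA.finsum_insert) (auto simp: Pi_def)
  then show ?case using insert by (simp add: fa_add)
qed

lemma rels_carrier:
  "rel_Hp \<in> carrier free_alg" "rel_Hm \<in> carrier free_alg" "rel_pm \<in> carrier free_alg"
proof -
  have *: "(\<lambda>w. word_el a w - word_el b w - c * word_el d w) \<in> carrier free_alg" for a b d and c :: "'k::field"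
    by (rule fa_carrierI) (auto simp: word_el_def intro: finite_subset[of _ "{a,b,d}"])
  have **: "(\<lambda>w. word_el a w - word_el b w + c * word_el d w) \<in> carrier free_alg" for a b d and c :: "'k::field"
    by (rule fa_carrierI) (auto simp: word_el_def intro: finite_subset[of _ "{a,b,d}"])
  show "rel_Hp \<in> carrier free_alg" unfolding rel_Hp_def by (rule *)
  show "rel_Hm \<in> carrier free_alg" unfolding rel_Hm_def by (rule **)
  show "rel_pm \<in> carrier free_alg" unfolding rel_pm_def using *[of _ _ 1] by simp
qed

lemma ideal_ideal_a: "ideal ideal_a free_alg"
  unfolding ideal_a_def by (rule FA.genideal_ideal) (simp add: rels_carrier)

lemma ideal_ideal_sl2: "ideal ideal_sl2 free_alg"
  unfolding ideal_sl2_def by (rule FA.genideal_ideal) (simp add: rels_carrier)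

lemma rels_in_sl2: "rel_Hp \<in> ideal_sl2" "rel_Hm \<in> ideal_sl2" "rel_pm \<in> ideal_sl2"
  using FA.genideal_self[of "{rel_Hp, rel_Hm, rel_pm}"] rels_carrier
  unfolding ideal_sl2_def by auto

lemma ideal_a_sub_sl2: "ideal_a \<subseteq> ideal_sl2"
  unfolding ideal_a_def by (rule FA.genideal_minimal[OF ideal_ideal_sl2]) (simp add: rels_in_sl2)

lemma abelian_subgroup_ideal_a: "abelian_subgroup ideal_a free_alg"
  by (rule abelian_subgroupI3[OF ideal.axioms(1)[OF ideal_ideal_a] FA.is_abelian_group])

lemma abelian_subgroup_ideal_sl2: "abelian_subgroup ideal_sl2 free_alg"
  by (rule abelian_subgroupI3[OF ideal.axioms(1)[OF ideal_ideal_sl2] FA.is_abelian_group])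

lemma ring_U_a: "ring U_a"
  unfolding U_a_def by (rule ideal.quotient_is_ring[OF ideal_ideal_a])

lemma ring_U_sl2: "ring U_sl2"
  unfolding U_sl2_def by (rule ideal.quotient_is_ring[OF ideal_ideal_sl2])

lemma rcos_a_hom: "(\<lambda>f. ideal_a +>\<^bsub>free_alg\<^esub> f) \<in> ring_hom free_alg U_a"
  unfolding U_a_def by (rule ideal.rcos_ring_hom[OF ideal_ideal_a])

lemma rcos_sl2_hom: "(\<lambda>f. ideal_sl2 +>\<^bsub>free_alg\<^esub> f) \<in> ring_hom free_alg U_sl2"
  unfolding U_sl2_def by (rule ideal.rcos_ring_hom[OF ideal_ideal_sl2])

lemma carrier_U_a: "carrier U_a = {ideal_a +>\<^bsub>free_alg\<^esub> f | f. f \<in> carrier free_alg}"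
  by (auto simp: U_a_def FactRing_def A_RCOSETS_def RCOSETS_def a_r_coset_def)

lemma carrier_U_sl2: "carrier U_sl2 = {ideal_sl2 +>\<^bsub>free_alg\<^esub> f | f. f \<in> carrier free_alg}"
  by (auto simp: U_sl2_def FactRing_def A_RCOSETS_def RCOSETS_def a_r_coset_def)

lemma rcos_mem_carrier: "x \<in> ideal_a +>\<^bsub>free_alg\<^esub> f \<Longrightarrow> f \<in> carrier free_alg \<Longrightarrow> x \<in> carrier free_alg"
  using additive_subgroup.a_subset[OF ideal.axioms(1)[OF ideal_ideal_a]]
  by (auto simp: a_r_coset_def r_coset_def intro!: FA.add.m_closed)

lemma rcos_a_eq: "x \<in> ideal_a +>\<^bsub>free_alg\<^esub> f \<Longrightarrow> f \<in> carrier free_alg \<Longrightarrow>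
    ideal_a +>\<^bsub>free_alg\<^esub> x = ideal_a +>\<^bsub>free_alg\<^esub> f"
  by (metis abelian_subgroup.a_repr_independence'[OF abelian_subgroup_ideal_a])

lemma rcos_a_diff: "x \<in> ideal_a +>\<^bsub>free_alg\<^esub> f \<Longrightarrow> f \<in> carrier free_alg \<Longrightarrow>
    x \<ominus>\<^bsub>free_alg\<^esub> f \<in> ideal_a"
  by (meson abelian_subgroup.a_rcos_module_minus[OF abelian_subgroup_ideal_a] FA.ring_axioms rcos_mem_carrier)

lemma rcos_self_ideal_a: "f \<in> carrier free_alg \<Longrightarrow> f \<in> ideal_a +>\<^bsub>free_alg\<^esub> f"
  by (rule abelian_subgroup.a_rcos_self[OF abelian_subgroup_ideal_a])

lemma str_sl2_rcos:
  assumes f: "f \<in> carrier free_alg"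
  shows "str_sl2 (ideal_a +>\<^bsub>free_alg\<^esub> f) = ideal_sl2 +>\<^bsub>free_alg\<^esub> f"
proof -
  let ?x = "SOME x. x \<in> ideal_a +>\<^bsub>free_alg\<^esub> f"
  have x: "?x \<in> ideal_a +>\<^bsub>free_alg\<^esub> f" using rcos_self_ideal_a[OF f] by (rule someI[where P="\<lambda>x. x \<in> ideal_a +>\<^bsub>free_alg\<^esub> f"])
  have xc: "?x \<in> carrier free_alg" using x f by (rule rcos_mem_carrier)
  have "?x \<ominus>\<^bsub>free_alg\<^esub> f \<in> ideal_sl2" using rcos_a_diff[OF x f] ideal_a_sub_sl2 by blast
  then have "?x \<in> ideal_sl2 +>\<^bsub>free_alg\<^esub> f"
    using abelian_subgroup.a_rcos_module_minus[OF abelian_subgroup_ideal_sl2 FA.ring_axioms f xc] by simp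
  then show ?thesis unfolding str_sl2_def using abelian_subgroup.a_repr_independence'[OF abelian_subgroup_ideal_sl2] f by metis
qed

lemma str_sl2_hom: "(str_sl2 :: (gen list \<Rightarrow> 'k::field) set \<Rightarrow> _) \<in> ring_hom U_a U_sl2"
proof (rule ring_hom_memI)
  fix x assume "x \<in> carrier U_a"
  then obtain f where f: "f \<in> carrier free_alg" "x = ideal_a +>\<^bsub>free_alg\<^esub> f"
    by (auto simp: carrier_U_a)
  then show "str_sl2 x \<in> carrier U_sl2" by (auto simp: str_sl2_rcos carrier_U_sl2)
next
  fix x y :: "(gen list \<Rightarrow> 'k) set" assume "x \<in> carrier U_a" "y \<in> carrier U_a"
  then obtain f g where f: "f \<in> carrier free_alg" "x = ideal_a +>\<^bsub>free_alg\<^esub> f"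
    and g: "g \<in> carrier free_alg" "y = ideal_a +>\<^bsub>free_alg\<^esub> g"
    by (auto simp: carrier_U_a)
  have "x \<otimes>\<^bsub>U_a\<^esub> y = ideal_a +>\<^bsub>free_alg\<^esub> (f \<otimes>\<^bsub>free_alg\<^esub> g)"
    using ring_hom_mult[OF rcos_a_hom f(1) g(1)] f g by simp
  moreover have "x \<oplus>\<^bsub>U_a\<^esub> y = ideal_a +>\<^bsub>free_alg\<^esub> (f \<oplus>\<^bsub>free_alg\<^esub> g)"
    using ring_hom_add[OF rcos_a_hom f(1) g(1)] f g by simp
  ultimately show "str_sl2 (x \<otimes>\<^bsub>U_a\<^esub> y) = str_sl2 x \<otimes>\<^bsub>U_sl2\<^esub> str_sl2 y"
    and "str_sl2 (x \<oplus>\<^bsub>U_a\<^esub> y) = str_sl2 x \<oplus>\<^bsub>U_sl2\<^esub> str_sl2 y"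
    using f g ring_hom_mult[OF rcos_sl2_hom f(1) g(1)] ring_hom_add[OF rcos_sl2_hom f(1) g(1)]
    by (simp_all add: str_sl2_rcos)
next
  show "str_sl2 \<one>\<^bsub>U_a\<^esub> = \<one>\<^bsub>U_sl2\<^esub>"
    unfolding U_a_def U_sl2_def FactRing_def
    using str_sl2_rcos[OF FA.one_closed] by simp
qed

locale word_rep =
  fixes act :: "gen \<Rightarrow> ('i \<Rightarrow> 'k::field) \<Rightarrow> ('i \<Rightarrow> 'k)" and Fin :: "('i \<Rightarrow> 'k) set"
  assumes act_lin: "act g (\<lambda>i. a * v i + b * u i) = (\<lambda>i. a * act g v i + b * act g u i)"
  and act_zero: "act g (\<lambda>i. 0) = (\<lambda>i. 0)"
  and Fin_act: "v \<in> Fin \<Longrightarrow> act g v \<in> Fin"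
  and Fin_lin: "v \<in> Fin \<Longrightarrow> u \<in> Fin \<Longrightarrow> (\<lambda>i. a * v i + b * u i) \<in> Fin"
  and Fin_cl: "(\<lambda>i. 0) \<in> Fin"
begin

definition word_act :: "gen list \<Rightarrow> ('i \<Rightarrow> 'k) \<Rightarrow> ('i \<Rightarrow> 'k)" where
  "word_act w = foldr (\<lambda>g acc. act g \<circ> acc) w id"

definition alg_act :: "(gen list \<Rightarrow> 'k) \<Rightarrow> ('i \<Rightarrow> 'k) \<Rightarrow> ('i \<Rightarrow> 'k)" where
  "alg_act f v = (\<lambda>i. \<Sum>w\<in>fsupp f. f w * word_act w v i)"

lemma word_act_Nil[simp]: "word_act [] v = v" by (simp add: word_act_def)
lemma word_act_Cons[simp]: "word_act (g # w) v = act g (word_act w v)" by (simp add: word_act_def)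
lemma word_act_append: "word_act (u @ w) v = word_act u (word_act w v)" by (induction u) auto

lemma act_sum:
  assumes "finite T"
  shows "act g (\<lambda>i. \<Sum>x\<in>T. c x * V x i) = (\<lambda>i. \<Sum>x\<in>T. c x * act g (V x) i)"
  using assms
proof (induction T rule: finite_induct)
  case empty then show ?case by (simp add: act_zero)
next
  case (insert x T)
  have "act g (\<lambda>i. \<Sum>y\<in>insert x T. c y * V y i) = act g (\<lambda>i. c x * V x i + 1 * (\<Sum>y\<in>T. c y * V y i))"
    using insert by simp
  also have "\<dots> = (\<lambda>i. c x * act g (V x) i + 1 * act g (\<lambda>i. \<Sum>y\<in>T. c y * V y i) i)"
    by (rule act_lin)
  finally show ?case using insert by simp
qed

lemma word_act_sum:
  assumes "finite T"
  shows "word_act w (\<lambda>i. \<Sum>x\<in>T. c x * V x i) = (\<lambda>i. \<Sum>x\<in>T. c x * word_act w (V x) i)"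
proof (induction w)
  case Nil then show ?case by simp
next
  case (Cons g w) then show ?case using act_sum[OF assms] by simp
qed

lemma word_act_zero: "word_act w (\<lambda>i. 0) = (\<lambda>i. 0)"
  by (induction w) (auto simp: act_zero)

lemma word_act_Fin: "v \<in> Fin \<Longrightarrow> word_act w v \<in> Fin"
  by (induction w) (auto simp: Fin_act)

lemma Fin_sum:
  assumes "finite T" "\<And>x. x \<in> T \<Longrightarrow> V x \<in> Fin"
  shows "(\<lambda>i. \<Sum>x\<in>T. c x * V x i) \<in> Fin"
  using assms
proof (induction T rule: finite_induct)
  case empty then show ?case by (simp add: Fin_cl)
next
  case (insert x T)
  have "(\<lambda>i. c x * V x i + 1 * (\<Sum>y\<in>T. c y * V y i)) \<in> Fin"
    using insert by (intro Fin_lin) auto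
  then show ?case using insert by simp
qed

lemma alg_act_eq:
  assumes "finite S" "fsupp f \<subseteq> S"
  shows "alg_act f v = (\<lambda>i. \<Sum>w\<in>S. f w * word_act w v i)"
proof (rule ext)
  fix i
  show "alg_act f v i = (\<Sum>w\<in>S. f w * word_act w v i)"
    unfolding alg_act_def using assms by (intro sum.mono_neutral_left) (auto simp: fsupp_def)
qed

lemma alg_act_Fin:
  assumes "f \<in> carrier free_alg" "v \<in> Fin"
  shows "alg_act f v \<in> Fin"
  unfolding alg_act_def using assms by (intro Fin_sum) (auto simp: fa_carrier word_act_Fin)

lemma alg_act_zero_vec: "alg_act f (\<lambda>i. 0) = (\<lambda>i. 0)"
  by (simp add: alg_act_def word_act_zero)

lemma alg_act_add:
  assumes f: "f \<in> carrier free_alg" and g: "g \<in> carrier free_alg"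
  shows "alg_act (f \<oplus>\<^bsub>free_alg\<^esub> g) v = (\<lambda>i. alg_act f v i + alg_act g v i)"
proof -
  let ?S = "fsupp f \<union> fsupp g"
  have fin: "finite ?S" using f g by (simp add: fa_carrier)
  have "alg_act (f \<oplus>\<^bsub>free_alg\<^esub> g) v = (\<lambda>i. \<Sum>w\<in>?S. (f w + g w) * word_act w v i)"
    unfolding fa_add by (rule alg_act_eq[OF fin]) (auto simp: fsupp_def)
  also have "\<dots> = (\<lambda>i. (\<Sum>w\<in>?S. f w * word_act w v i) + (\<Sum>w\<in>?S. g w * word_act w v i))"
    by (simp add: distrib_right sum.distrib)
  also have "\<dots> = (\<lambda>i. alg_act f v i + alg_act g v i)"
    by (simp add: alg_act_eq[OF fin, of f] alg_act_eq[OF fin, of g])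
  finally show ?thesis .
qed

lemma alg_act_scale:
  assumes f: "f \<in> carrier free_alg"
  shows "alg_act (\<lambda>w. c * f w) v = (\<lambda>i. c * alg_act f v i)"
proof -
  have fin: "finite (fsupp f)" using f by (simp add: fa_carrier)
  have "alg_act (\<lambda>w. c * f w) v = (\<lambda>i. \<Sum>w\<in>fsupp f. (c * f w) * word_act w v i)"
    by (rule alg_act_eq[OF fin]) (auto simp: fsupp_def)
  then show ?thesis by (simp add: alg_act_def sum_distrib_left mult.assoc)
qed

lemma alg_act_mult:
  assumes f: "f \<in> carrier free_alg" and g: "g \<in> carrier free_alg"
  shows "alg_act (f \<otimes>\<^bsub>free_alg\<^esub> g) v = alg_act f (alg_act g v)"
proof (rule ext)
  fix i
  let ?A = "fsupp f" and ?B = "fsupp g"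
  let ?S = "(\<lambda>(a,b). a @ b) ` (?A \<times> ?B)"
  have fA: "finite ?A" and fB: "finite ?B" using f g by (auto simp: fa_carrier)
  then have fS: "finite ?S" by simp
  have "alg_act (f \<otimes>\<^bsub>free_alg\<^esub> g) v i = (\<Sum>w\<in>?S. (\<Sum>(a,b)\<in>splits w. f a * g b) * word_act w v i)"
    using alg_act_eq[OF fS, of "f \<otimes>\<^bsub>free_alg\<^esub> g"] fsupp_mult[of f g] by (simp add: fa_mult)
  also have "\<dots> = (\<Sum>w\<in>?S. (\<Sum>p\<in>{p\<in>?A \<times> ?B. fst p @ snd p = w}. f (fst p) * g (snd p) * word_act (fst p @ snd p) v i))"
  proof (rule sum.cong[OF refl])
    fix w assume "w \<in> ?S"
    have "(\<Sum>(a,b)\<in>splits w. f a * g b) * word_act w v i = (\<Sum>p\<in>splits w. f (fst p) * g (snd p) * word_act (fst p @ snd p) v i)"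
      by (simp add: sum_distrib_right case_prod_beta splits_def)
    also have "\<dots> = (\<Sum>p\<in>{p\<in>?A \<times> ?B. fst p @ snd p = w}. f (fst p) * g (snd p) * word_act (fst p @ snd p) v i)"
      by (rule sum.mono_neutral_right[OF finite_splits]) (auto simp: splits_def fsupp_def)
    finally show "(\<Sum>(a,b)\<in>splits w. f a * g b) * word_act w v i = (\<Sum>p\<in>{p\<in>?A \<times> ?B. fst p @ snd p = w}. f (fst p) * g (snd p) * word_act (fst p @ snd p) v i)" .
  qed
  also have "\<dots> = (\<Sum>p\<in>?A \<times> ?B. f (fst p) * g (snd p) * word_act (fst p @ snd p) v i)"
    by (rule sum.group) (use fA fB in auto)
  also have "\<dots> = (\<Sum>a\<in>?A. \<Sum>b\<in>?B. f a * g b * word_act (a @ b) v i)"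
    by (simp add: sum.cartesian_product case_prod_beta)
  also have "\<dots> = (\<Sum>a\<in>?A. f a * (\<Sum>b\<in>?B. g b * word_act a (word_act b v) i))"
    by (simp add: sum_distrib_left word_act_append mult.assoc)
  also have "\<dots> = alg_act f (alg_act g v) i"
    by (simp add: alg_act_def word_act_sum[OF fB])
  finally show "alg_act (f \<otimes>\<^bsub>free_alg\<^esub> g) v i = alg_act f (alg_act g v) i" .
qed

definition annihilator :: "(gen list \<Rightarrow> 'k) set" where
  "annihilator = {f \<in> carrier free_alg. \<forall>v\<in>Fin. alg_act f v = (\<lambda>i. 0)}"

lemma annihilator_ideal: "ideal annihilator free_alg"
proof (rule idealI_closed[OF ring_free_alg])
  show "annihilator \<subseteq> carrier free_alg" by (auto simp: annihilator_def)
  show "\<zero>\<^bsub>free_alg\<^esub> \<in> annihilator" by (auto simp: annihilator_def fa_zero alg_act_def fsupp_def fa_carrier)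
next
  fix a b assume "a \<in> annihilator" "b \<in> annihilator"
  then show "a \<oplus>\<^bsub>free_alg\<^esub> b \<in> annihilator" by (auto simp: annihilator_def alg_act_add)
next
  fix a assume a: "a \<in> annihilator"
  then have "\<ominus>\<^bsub>free_alg\<^esub> a = (\<lambda>w. (-1) * a w)" by (simp add: annihilator_def fa_neg)
  moreover have "(\<lambda>w. (-1) * a w) \<in> annihilator"
  proof -
    have ac: "a \<in> carrier free_alg" using a by (simp add: annihilator_def)
    have "(\<lambda>w. (-1) * a w) \<in> carrier free_alg" by (rule fa_scale_carrier[OF ac])
    moreover have "\<forall>v\<in>Fin. alg_act (\<lambda>w. (-1) * a w) v = (\<lambda>i. 0)"
      using a alg_act_scale[OF ac, of "-1"] by (simp add: annihilator_def)
    ultimately show ?thesis by (simp add: annihilator_def)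
  qed
  ultimately show "\<ominus>\<^bsub>free_alg\<^esub> a \<in> annihilator" by simp
next
  fix a x :: "gen list \<Rightarrow> 'k" assume a: "a \<in> annihilator" and x: "x \<in> carrier free_alg"
  then show "x \<otimes>\<^bsub>free_alg\<^esub> a \<in> annihilator"
    by (auto simp: annihilator_def alg_act_mult alg_act_zero_vec)
  show "a \<otimes>\<^bsub>free_alg\<^esub> x \<in> annihilator" using a x
    by (auto simp: annihilator_def alg_act_mult alg_act_Fin)
qed

lemma alg_act_sum:
  assumes "finite T"
  shows "alg_act f (\<lambda>i. \<Sum>x\<in>T. c x * V x i) = (\<lambda>i. \<Sum>x\<in>T. c x * alg_act f (V x) i)"
  by (simp add: alg_act_def word_act_sum[OF assms] sum_distrib_left mult.left_commute sum.swap[of _ T])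

lemma alg_act_rel_Hp: "alg_act rel_Hp v = (\<lambda>i. word_act [GH,GXp] v i - word_act [GXp,GH] v i - 2 * word_act [GXp] v i)" (is "_ = ?rhs")
proof -
  have "alg_act rel_Hp v = (\<lambda>i. \<Sum>w\<in>{[GH,GXp],[GXp,GH],[GXp]}. rel_Hp w * word_act w v i)"
    by (rule alg_act_eq) (auto simp: fsupp_def rel_Hp_def word_el_def)
  also have "\<dots> = ?rhs" by (simp add: rel_Hp_def word_el_def fun_eq_iff algebra_simps)
  finally show ?thesis .
qed

lemma alg_act_rel_Hm: "alg_act rel_Hm v = (\<lambda>i. word_act [GH,GXm] v i - word_act [GXm,GH] v i + 2 * word_act [GXm] v i)" (is "_ = ?rhs")
proof -
  have "alg_act rel_Hm v = (\<lambda>i. \<Sum>w\<in>{[GH,GXm],[GXm,GH],[GXm]}. rel_Hm w * word_act w v i)"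
    by (rule alg_act_eq) (auto simp: fsupp_def rel_Hm_def word_el_def)
  also have "\<dots> = ?rhs" by (simp add: rel_Hm_def word_el_def fun_eq_iff algebra_simps)
  finally show ?thesis .
qed

lemma alg_act_rel_pm: "alg_act rel_pm v = (\<lambda>i. word_act [GXp,GXm] v i - word_act [GXm,GXp] v i - word_act [GH] v i)" (is "_ = ?rhs")
proof -
  have "alg_act rel_pm v = (\<lambda>i. \<Sum>w\<in>{[GXp,GXm],[GXm,GXp],[GH]}. rel_pm w * word_act w v i)"
    by (rule alg_act_eq) (auto simp: fsupp_def rel_pm_def word_el_def)
  also have "\<dots> = ?rhs" by (simp add: rel_pm_def word_el_def fun_eq_iff algebra_simps)
  finally show ?thesis .
qed

end

section \<open>The modules V_h(n,psi) and their reductions V(n)\<close>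

text \<open>\<open>act_h\<close> is \<open>gen_op\<close> uncurried, the coefficient of h^m b_k sitting at index (m,k);
  \<open>act_cl\<close> is its reduction V(n) = V_h(n,psi)/h, on which X+ acts through the constant terms
  k(n-k+1) prescribed by (C1).\<close>

definition act_h :: "(nat \<Rightarrow> int \<Rightarrow> 'k::field_char_0 fps) \<Rightarrow> int \<Rightarrow> gen \<Rightarrow> (nat \<times> nat \<Rightarrow> 'k) \<Rightarrow> (nat \<times> nat \<Rightarrow> 'k)" where
  "act_h \<psi> n g v = case_prod (gen_op \<psi> n g (curry v))"

definition Fin_h :: "(nat \<times> nat \<Rightarrow> 'k::field) set" where
  "Fin_h = {v. \<forall>m. finite {k. v (m,k) \<noteq> 0}}"

fun act_cl :: "int \<Rightarrow> gen \<Rightarrow> (nat \<Rightarrow> 'k::field_char_0) \<Rightarrow> (nat \<Rightarrow> 'k)" where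
  "act_cl n GH v = (\<lambda>k. of_int (n - 2 * int k) * v k)"
| "act_cl n GXm v = (\<lambda>k. if k = 0 then 0 else v (k - 1))"
| "act_cl n GXp v = (\<lambda>k. of_int ((int k + 1) * (n - int k)) * v (k + 1))"

definition Fin_cl :: "(nat \<Rightarrow> 'k::field) set" where
  "Fin_cl = {v. finite {k. v k \<noteq> 0}}"

lemma finite_support_shift_down:
  fixes v :: "nat \<Rightarrow> 'a::zero"
  shows "finite {k. v k \<noteq> 0} \<Longrightarrow> finite {k. v (k + 1) \<noteq> 0}"
  using finite_vimageI[of "{k. v k \<noteq> 0}" Suc] by (simp add: vimage_def)

lemma finite_support_shift_up:
  fixes v :: "nat \<Rightarrow> 'a::zero"
  assumes "finite {k. v k \<noteq> 0}"
  shows "finite {k. 0 < k \<and> v (k - 1) \<noteq> 0}"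
proof (rule finite_subset[OF _ finite_imageI[OF assms, of Suc]])
  show "{k. 0 < k \<and> v (k - 1) \<noteq> 0} \<subseteq> Suc ` {k. v k \<noteq> 0}"
  proof
    fix k assume "k \<in> {k. 0 < k \<and> v (k - 1) \<noteq> 0}"
    then show "k \<in> Suc ` {k. v k \<noteq> 0}" by (intro image_eqI[of _ _ "k - 1"]) auto
  qed
qed

lemma act_h_Fin_h:
  assumes v: "v \<in> Fin_h"
  shows "act_h \<psi> n g v \<in> Fin_h"
proof -
  have v_m: "finite {k. v (m', k) \<noteq> 0}" for m'
    using v by (simp add: Fin_h_def)
  have "finite {k. act_h \<psi> n g v (m, k) \<noteq> 0}" for m
  proof (cases g)
    case GH
    have "{k. act_h \<psi> n g v (m, k) \<noteq> 0} \<subseteq> {k. v (m, k) \<noteq> 0}"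
      by (simp add: act_h_def GH Collect_mono_iff)
    then show ?thesis using v_m by (rule finite_subset)
  next
    case GXm
    have "act_h \<psi> n g v (m, k) = (if k = 0 then 0 else v (m, k - 1))" for k
      by (simp add: act_h_def GXm)
    then have "{k. act_h \<psi> n g v (m, k) \<noteq> 0} \<subseteq> {k. 0 < k \<and> v (m, k - 1) \<noteq> 0}"
      by auto
    then show ?thesis using finite_support_shift_up[OF v_m] by (rule finite_subset)
  next
    case GXp
    have "{k. act_h \<psi> n g v (m, k) \<noteq> 0} \<subseteq> (\<Union>i\<le>m. {k. v (m - i, k + 1) \<noteq> 0})"
    proof
      fix k assume "k \<in> {k. act_h \<psi> n g v (m, k) \<noteq> 0}"
      then have "(\<Sum>i\<le>m. fps_nth (\<psi> (k + 1) n) i * v (m - i, k + 1)) \<noteq> 0"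
        by (simp add: act_h_def GXp)
      then obtain i where "i \<in> {..m}" "fps_nth (\<psi> (k + 1) n) i * v (m - i, k + 1) \<noteq> 0"
        by (meson sum.not_neutral_contains_not_neutral)
      then show "k \<in> (\<Union>i\<le>m. {k. v (m - i, k + 1) \<noteq> 0})" by auto
    qed
    moreover have "finite (\<Union>i\<le>m. {k. v (m - i, k + 1) \<noteq> 0})"
      using finite_support_shift_down[OF v_m] by blast
    ultimately show ?thesis by (rule finite_subset)
  qed
  then show ?thesis by (simp add: Fin_h_def)
qed

lemma word_rep_h: "word_rep (act_h \<psi> n) Fin_h"
proof
  fix g a b v u
  show "act_h \<psi> n g (\<lambda>i. a * v i + b * u i) = (\<lambda>i. a * act_h \<psi> n g v i + b * act_h \<psi> n g u i)"
    by (cases g) (auto simp: act_h_def fun_eq_iff algebra_simps sum_distrib_left sum.distrib)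
next
  fix g show "act_h \<psi> n g (\<lambda>i. 0) = (\<lambda>i. 0)"
    by (cases g) (auto simp: act_h_def fun_eq_iff)
next
  fix a b and v u :: "nat \<times> nat \<Rightarrow> 'a"
  assume "v \<in> Fin_h" "u \<in> Fin_h"
  have "finite {k. a * v (m, k) + b * u (m, k) \<noteq> 0}" for m
  proof (rule finite_subset)
    show "{k. a * v (m, k) + b * u (m, k) \<noteq> 0} \<subseteq> {k. v (m, k) \<noteq> 0} \<union> {k. u (m, k) \<noteq> 0}"
      by auto
    show "finite ({k. v (m, k) \<noteq> 0} \<union> {k. u (m, k) \<noteq> 0})"
      using \<open>v \<in> Fin_h\<close> \<open>u \<in> Fin_h\<close> by (simp add: Fin_h_def)
  qed
  then show "(\<lambda>i. a * v i + b * u i) \<in> Fin_h"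
    by (simp add: Fin_h_def)
next
  fix g and v :: "nat \<times> nat \<Rightarrow> 'a"
  show "v \<in> Fin_h \<Longrightarrow> act_h \<psi> n g v \<in> Fin_h" by (rule act_h_Fin_h)
next
  show "(\<lambda>i. 0) \<in> Fin_h" by (simp add: Fin_h_def)
qed

lemma act_cl_Fin_cl:
  assumes "v \<in> Fin_cl"
  shows "act_cl n g v \<in> Fin_cl"
proof -
  have v: "finite {k. v k \<noteq> 0}" using assms by (simp add: Fin_cl_def)
  have "finite {k. act_cl n g v k \<noteq> 0}"
  proof (cases g)
    case GH
    have "{k. act_cl n g v k \<noteq> 0} \<subseteq> {k. v k \<noteq> 0}"
      by (simp add: GH Collect_mono_iff)
    then show ?thesis using v by (rule finite_subset)
  next
    case GXm
    have "{k. act_cl n g v k \<noteq> 0} \<subseteq> {k. 0 < k \<and> v (k - 1) \<noteq> 0}"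
      by (simp add: GXm Collect_mono_iff)
    then show ?thesis using finite_support_shift_up[OF v] by (rule finite_subset)
  next
    case GXp
    have "{k. act_cl n g v k \<noteq> 0} \<subseteq> {k. v (k + 1) \<noteq> 0}"
      by (simp add: GXp Collect_mono_iff)
    then show ?thesis using finite_support_shift_down[OF v] by (rule finite_subset)
  qed
  then show ?thesis by (simp add: Fin_cl_def)
qed

lemma word_rep_cl: "word_rep (act_cl n) Fin_cl"
proof
  fix g a b v u
  show "act_cl n g (\<lambda>i. a * v i + b * u i) = (\<lambda>i. a * act_cl n g v i + b * act_cl n g u i)"
    by (cases g) (auto simp: fun_eq_iff algebra_simps)
next
  fix g show "act_cl n g (\<lambda>i. 0) = (\<lambda>i. 0)"
    by (cases g) (auto simp: fun_eq_iff)
next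
  fix g and v :: "nat \<Rightarrow> 'a"
  show "v \<in> Fin_cl \<Longrightarrow> act_cl n g v \<in> Fin_cl" by (rule act_cl_Fin_cl)
next
  fix a b and v u :: "nat \<Rightarrow> 'a"
  assume "v \<in> Fin_cl" "u \<in> Fin_cl"
  then show "(\<lambda>i. a * v i + b * u i) \<in> Fin_cl"
    unfolding Fin_cl_def
    by (auto intro: finite_subset[of _ "{k. v k \<noteq> 0} \<union> {k. u k \<noteq> 0}"])
next
  show "(\<lambda>i. 0) \<in> Fin_cl" by (simp add: Fin_cl_def)
qed

lemma act_h_rel_Hp: "act_h \<psi> n GH (act_h \<psi> n GXp v) (m,k) - act_h \<psi> n GXp (act_h \<psi> n GH v) (m,k)
   - 2 * act_h \<psi> n GXp v (m,k) = 0"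
proof -
  let ?S = "\<Sum>i\<le>m. fps_nth (\<psi> (k + 1) n) i * v (m - i, k + 1)"
  have "act_h \<psi> n GH (act_h \<psi> n GXp v) (m,k) = of_int (n - 2 * int k) * ?S"
    by (simp add: act_h_def)
  moreover have "act_h \<psi> n GXp (act_h \<psi> n GH v) (m,k) = of_int (n - 2 * int (k + 1)) * ?S"
    by (simp add: act_h_def sum_distrib_left mult.left_commute)
  moreover have "act_h \<psi> n GXp v (m,k) = ?S" by (simp add: act_h_def)
  ultimately show ?thesis by (simp only:) (simp add: algebra_simps)
qed

lemma act_h_rel_Hm: "act_h \<psi> n GH (act_h \<psi> n GXm v) (m,k) - act_h \<psi> n GXm (act_h \<psi> n GH v) (m,k)
   + 2 * act_h \<psi> n GXm v (m,k) = 0"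
  by (cases k) (auto simp: act_h_def algebra_simps)

lemma rels_a_annihilate_h:
  "rel_Hp \<in> word_rep.annihilator (act_h \<psi> n) Fin_h" "rel_Hm \<in> word_rep.annihilator (act_h \<psi> n) Fin_h"
proof -
  interpret word_rep "act_h \<psi> n" Fin_h by (rule word_rep_h)
  show "rel_Hp \<in> annihilator"
    using act_h_rel_Hp by (auto simp: annihilator_def rels_carrier alg_act_rel_Hp fun_eq_iff)
  show "rel_Hm \<in> annihilator"
    using act_h_rel_Hm by (auto simp: annihilator_def rels_carrier alg_act_rel_Hm fun_eq_iff)
qed

lemma ideal_a_annihilates_h: "ideal_a \<subseteq> word_rep.annihilator (act_h \<psi> n) Fin_h"
  unfolding ideal_a_def
  by (rule FA.genideal_minimal[OF word_rep.annihilator_ideal[OF word_rep_h]]) (simp add: rels_a_annihilate_h)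

lemma rels_sl2_annihilate_cl:
  "rel_Hp \<in> word_rep.annihilator (act_cl n) Fin_cl" "rel_Hm \<in> word_rep.annihilator (act_cl n) Fin_cl" "rel_pm \<in> word_rep.annihilator (act_cl n) Fin_cl"
proof -
  interpret word_rep "act_cl n" Fin_cl by (rule word_rep_cl)
  show "rel_Hp \<in> annihilator"
    by (auto simp: annihilator_def rels_carrier alg_act_rel_Hp fun_eq_iff algebra_simps)
  show "rel_Hm \<in> annihilator"
    by (auto simp: annihilator_def rels_carrier alg_act_rel_Hm fun_eq_iff algebra_simps)
  show "rel_pm \<in> annihilator"
    by (auto simp: annihilator_def rels_carrier alg_act_rel_pm fun_eq_iff algebra_simps)
qed

lemma ideal_sl2_annihilates_cl: "ideal_sl2 \<subseteq> word_rep.annihilator (act_cl n) Fin_cl"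
  unfolding ideal_sl2_def
  by (rule FA.genideal_minimal[OF word_rep.annihilator_ideal[OF word_rep_cl]]) (simp add: rels_sl2_annihilate_cl)

lemma word_op_eq_word_act: "word_op \<psi> n w V = curry (word_rep.word_act (act_h \<psi> n) w (case_prod V))"
proof (induction w arbitrary: V)
  case Nil then show ?case by (simp add: word_op_def word_rep.word_act_Nil[OF word_rep_h])
next
  case (Cons g w)
  have "word_op \<psi> n (g # w) V = gen_op \<psi> n g (word_op \<psi> n w V)" by (simp add: word_op_def)
  also have "\<dots> = gen_op \<psi> n g (curry (word_rep.word_act (act_h \<psi> n) w (case_prod V)))" by (simp only: Cons)
  also have "\<dots> = curry (act_h \<psi> n g (word_rep.word_act (act_h \<psi> n) w (case_prod V)))"
    by (simp only: act_h_def curry_case_prod)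
  also have "\<dots> = curry (word_rep.word_act (act_h \<psi> n) (g # w) (case_prod V))"
    by (simp only: word_rep.word_act_Cons[OF word_rep_h])
  finally show ?case .
qed

lemma fa_op_eq_alg_act: "fa_op \<psi> n f V = curry (word_rep.alg_act (act_h \<psi> n) f (case_prod V))"
  by (simp add: fa_op_def word_rep.alg_act_def[OF word_rep_h] word_op_eq_word_act fsupp_def fun_eq_iff)

lemma Vh_carrier_iff_Fin_h: "V \<in> Vh_carrier \<longleftrightarrow> case_prod V \<in> Fin_h"
  by (simp add: Vh_carrier_def Fin_h_def)

lemma gen_op_const_term:
  assumes "colouring \<psi>"
  shows "gen_op \<psi> n g V 0 = act_cl n g (V 0)"
proof (cases g)
  case GXp
  have C1: "\<forall>k\<ge>1. \<forall>n. fps_nth (\<psi> k n) 0 = of_int (int k * (n - int k + 1))"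
    using assms unfolding colouring_def by blast
  have "fps_nth (\<psi> (k + 1) n) 0 = of_int ((int k + 1) * (n - int k))" for k
    using C1[rule_format, of "k+1" n] by (simp add: algebra_simps)
  then show ?thesis using GXp by (simp add: fun_eq_iff)
qed auto

lemma word_op_const_term:
  assumes "colouring \<psi>"
  shows "word_op \<psi> n w V 0 = word_rep.word_act (act_cl n) w (V 0)"
proof (induction w)
  case Nil then show ?case by (simp add: word_op_def word_rep.word_act_Nil[OF word_rep_cl])
next
  case (Cons g w)
  have "word_op \<psi> n (g # w) V = gen_op \<psi> n g (word_op \<psi> n w V)" by (simp add: word_op_def)
  then show ?case using Cons gen_op_const_term[OF assms] by (simp add: word_rep.word_act_Cons[OF word_rep_cl])
qed

lemma fa_op_const_term:
  assumes "colouring \<psi>"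
  shows "fa_op \<psi> n f V 0 = word_rep.alg_act (act_cl n) f (V 0)"
  by (simp add: fa_op_def word_rep.alg_act_def[OF word_rep_cl] word_op_const_term[OF assms] fsupp_def fun_eq_iff)

lemma fa_op_add:
  assumes "f \<in> carrier free_alg" "g \<in> carrier free_alg"
  shows "fa_op \<psi> n (f \<oplus>\<^bsub>free_alg\<^esub> g) V = (\<lambda>m k. fa_op \<psi> n f V m k + fa_op \<psi> n g V m k)"
  by (simp add: fa_op_eq_alg_act word_rep.alg_act_add[OF word_rep_h assms] fun_eq_iff)

lemma fa_op_mult:
  assumes "f \<in> carrier free_alg" "g \<in> carrier free_alg"
  shows "fa_op \<psi> n (f \<otimes>\<^bsub>free_alg\<^esub> g) V = fa_op \<psi> n f (fa_op \<psi> n g V)"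
  by (simp add: fa_op_eq_alg_act word_rep.alg_act_mult[OF word_rep_h assms] fun_eq_iff)

lemma fa_op_Vh:
  assumes "f \<in> carrier free_alg" "V \<in> Vh_carrier"
  shows "fa_op \<psi> n f V \<in> Vh_carrier"
  using word_rep.alg_act_Fin[OF word_rep_h assms(1)] assms(2) by (simp add: fa_op_eq_alg_act Vh_carrier_iff_Fin_h)

lemma fa_op_zero: "fa_op \<psi> n f (\<lambda>m k. 0) = (\<lambda>m k. 0)"
proof -
  have e: "case_prod (\<lambda>(x::nat) (y::nat). 0::'a) = (\<lambda>i. 0)" by auto
  show ?thesis unfolding fa_op_eq_alg_act e word_rep.alg_act_zero_vec[OF word_rep_h] by (simp add: fun_eq_iff)
qed

lemma fa_op_ideal_a:
  assumes "f \<in> ideal_a" "V \<in> Vh_carrier"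
  shows "fa_op \<psi> n f V = (\<lambda>m k. 0)"
  using ideal_a_annihilates_h[of \<psi> n] assms
  by (auto simp: word_rep.annihilator_def[OF word_rep_h] fa_op_eq_alg_act Vh_carrier_iff_Fin_h fun_eq_iff)

lemma fa_op_lin:
  assumes "finite T"
  shows "fa_op \<psi> n f (\<lambda>m k. \<Sum>x\<in>T. c x * V x m k) = (\<lambda>m k. \<Sum>x\<in>T. c x * fa_op \<psi> n f (V x) m k)"
proof -
  have e: "case_prod (\<lambda>m k. \<Sum>x\<in>T. c x * V x m k) = (\<lambda>i. \<Sum>x\<in>T. c x * case_prod (V x) i)"
    by (auto simp: fun_eq_iff)
  show ?thesis unfolding fa_op_eq_alg_act e word_rep.alg_act_sum[OF word_rep_h assms] by (simp add: fun_eq_iff)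
qed

lemma fa_op_finsum:
  assumes "finite A" "\<And>i. i \<in> A \<Longrightarrow> h i \<in> carrier free_alg"
  shows "fa_op \<psi> n (finsum free_alg h A) V = (\<lambda>m k. \<Sum>i\<in>A. fa_op \<psi> n (h i) V m k)"
  using assms
proof (induction A rule: finite_induct)
  case empty
  have "fa_op \<psi> n (\<zero>\<^bsub>free_alg\<^esub>) V = (\<lambda>m k. 0)"
    by (simp add: fa_op_def fa_zero)
  then show ?case by simp
next
  case (insert x A)
  then have "finsum free_alg h (insert x A) = h x \<oplus>\<^bsub>free_alg\<^esub> finsum free_alg h A"
    by (intro FA.finsum_insert) (auto simp: Pi_def)
  moreover have "finsum free_alg h A \<in> carrier free_alg"
    using insert by (intro FA.finsum_closed) (auto simp: Pi_def)
  ultimately show ?case using insert by (simp add: fa_op_add)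
qed

text \<open>Free-algebra elements act h-linearly on V_h(n,psi): the coefficient of h^p of the result
  depends only on the coefficients up to h^p, and the action commutes with multiplication by h
  (\<open>shiftV\<close>). Together these let the action pass through h-adic convolutions.\<close>

definition shiftV :: "nat \<Rightarrow> (nat \<Rightarrow> nat \<Rightarrow> 'k::field) \<Rightarrow> (nat \<Rightarrow> nat \<Rightarrow> 'k)" where
  "shiftV l V = (\<lambda>m k. if l \<le> m then V (m - l) k else 0)"

lemma gen_op_causal:
  assumes "\<forall>m'\<le>p. V m' = W m'" "m \<le> p"
  shows "gen_op \<psi> n g V m = gen_op \<psi> n g W m"
  using assms by (cases g) (auto simp: fun_eq_iff intro!: sum.cong)

lemma word_op_causal:
  assumes "\<forall>m'\<le>p. V m' = W m'"
  shows "\<forall>m'\<le>p. word_op \<psi> n w V m' = word_op \<psi> n w W m'"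
proof (induction w)
  case Nil then show ?case using assms by (simp add: word_op_def)
next
  case (Cons g w)
  then show ?case
    by (auto simp: word_op_def intro!: gen_op_causal[of p "foldr (\<lambda>g acc. gen_op \<psi> n g \<circ> acc) w id V"])
qed

lemma fa_op_causal:
  assumes "\<forall>m'\<le>p. V m' = W m'"
  shows "fa_op \<psi> n f V p = fa_op \<psi> n f W p"
  using word_op_causal[OF assms] by (simp add: fa_op_def fun_eq_iff)

lemma gen_op_shift: "gen_op \<psi> n g (shiftV l V) = shiftV l (gen_op \<psi> n g V)"
proof (cases g)
  case GXp
  have "(\<Sum>i\<le>m. fps_nth (\<psi> (k + 1) n) i * (if l \<le> m - i then V (m - i - l) (k + 1) else 0))
      = (if l \<le> m then \<Sum>i\<le>m - l. fps_nth (\<psi> (k + 1) n) i * V (m - l - i) (k + 1) else 0)" for m k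
  proof (cases "l \<le> m")
    case True
    have "(\<Sum>i\<le>m. fps_nth (\<psi> (k + 1) n) i * (if l \<le> m - i then V (m - i - l) (k + 1) else 0))
        = (\<Sum>i\<le>m. if i \<in> {..m - l} then fps_nth (\<psi> (k + 1) n) i * V (m - l - i) (k + 1) else 0)"
      using True by (intro sum.cong) (auto simp: algebra_simps)
    also have "\<dots> = (\<Sum>i\<in>{..m} \<inter> {..m - l}. fps_nth (\<psi> (k + 1) n) i * V (m - l - i) (k + 1))"
      by (rule sum.inter_restrict[symmetric, OF finite_atMost])
    also have "{..m} \<inter> {..m - l} = {..m - l}" by auto
    finally show ?thesis using True by simp
  next
    case False then show ?thesis by (auto intro!: sum.neutral)
  qed
  then show ?thesis using GXp by (simp add: shiftV_def fun_eq_iff)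
qed (auto simp: shiftV_def fun_eq_iff)

lemma word_op_shift: "word_op \<psi> n w (shiftV l V) = shiftV l (word_op \<psi> n w V)"
  by (induction w) (simp_all add: word_op_def gen_op_shift)

lemma fa_op_shift: "fa_op \<psi> n f (shiftV l V) = shiftV l (fa_op \<psi> n f V)"
  unfolding fa_op_def word_op_shift by (auto simp: shiftV_def fun_eq_iff)

lemma fa_op_convolution:
  "fa_op \<psi> n f (\<lambda>m' k'. \<Sum>l\<le>m'. Y l (m' - l) k') p k = (\<Sum>l\<le>p. fa_op \<psi> n f (Y l) (p - l) k)"
proof -
  let ?W = "\<lambda>m' k'. \<Sum>l\<in>{..p}. 1 * shiftV l (Y l) m' k'"
  have agree: "\<forall>m'\<le>p. (\<lambda>k'. \<Sum>l\<le>m'. Y l (m' - l) k') = ?W m'"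
  proof (intro allI impI ext)
    fix m' k' assume m': "m' \<le> p"
    have "(\<Sum>l\<in>{..p}. 1 * shiftV l (Y l) m' k') = (\<Sum>l\<in>{..p}. if l \<in> {..m'} then Y l (m' - l) k' else 0)"
      by (intro sum.cong) (auto simp: shiftV_def)
    also have "\<dots> = (\<Sum>l\<in>{..p} \<inter> {..m'}. Y l (m' - l) k')" by (rule sum.inter_restrict[symmetric, OF finite_atMost])
    also have "{..p} \<inter> {..m'} = {..m'}" using m' by auto
    finally show "(\<Sum>l\<le>m'. Y l (m' - l) k') = ?W m' k'" by simp
  qed
  have "fa_op \<psi> n f (\<lambda>m' k'. \<Sum>l\<le>m'. Y l (m' - l) k') p k = fa_op \<psi> n f ?W p k"
    using fa_op_causal[OF agree] by simp
  also have "\<dots> = (\<Sum>l\<in>{..p}. 1 * fa_op \<psi> n f (shiftV l (Y l)) p k)"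
    by (simp only: fa_op_lin[OF finite_atMost])
  also have "\<dots> = (\<Sum>l\<le>p. fa_op \<psi> n f (Y l) (p - l) k)"
    unfolding fa_op_shift by (auto simp: shiftV_def)
  finally show ?thesis .
qed

interpretation UA: ring "U_a :: (gen list \<Rightarrow> 'k::field) set ring"
  by (rule ring_U_a)

interpretation UHA: ring "U_h_a :: (nat \<Rightarrow> (gen list \<Rightarrow> 'k::field) set) ring"
  unfolding U_h_a_def by (rule UA.ring_series_ring)

definition rep :: "(gen list \<Rightarrow> 'k::field) set \<Rightarrow> (gen list \<Rightarrow> 'k)" where
  "rep C = (SOME f. f \<in> C)"

lemma U_a_coset_repr:
  assumes C: "C \<in> carrier U_a" and x: "x \<in> C"
  shows "x \<in> carrier free_alg" "C = ideal_a +>\<^bsub>free_alg\<^esub> x"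
proof -
  obtain f where f: "f \<in> carrier free_alg" "C = ideal_a +>\<^bsub>free_alg\<^esub> f"
    using C by (auto simp: carrier_U_a)
  show xc: "x \<in> carrier free_alg" using x f rcos_mem_carrier by blast
  show "C = ideal_a +>\<^bsub>free_alg\<^esub> x" using rcos_a_eq[of x f] x f by simp
qed

lemma rep_in:
  assumes C: "C \<in> carrier U_a"
  shows "rep C \<in> C" "rep C \<in> carrier free_alg"
proof -
  obtain f where f: "f \<in> carrier free_alg" "C = ideal_a +>\<^bsub>free_alg\<^esub> f"
    using C by (auto simp: carrier_U_a)
  then have "f \<in> C" using rcos_self_ideal_a by blast
  then show r: "rep C \<in> C" unfolding rep_def by (rule someI[where P="\<lambda>f. f \<in> C"])
  show "rep C \<in> carrier free_alg" using U_a_coset_repr[OF C r] by simp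
qed

lemma rep_act:
  assumes C: "C \<in> carrier U_a" and f: "f \<in> C" and V: "V \<in> Vh_carrier"
  shows "fa_op \<psi> n (rep C) V = fa_op \<psi> n f V"
proof -
  have fc: "f \<in> carrier free_alg" and Cf: "C = ideal_a +>\<^bsub>free_alg\<^esub> f"
    using U_a_coset_repr[OF C f] by auto
  have rc: "rep C \<in> carrier free_alg" and r: "rep C \<in> C" using rep_in[OF C] by auto
  have d: "rep C \<ominus>\<^bsub>free_alg\<^esub> f \<in> ideal_a" using rcos_a_diff[of "rep C" f] r Cf fc by simp
  have dc: "rep C \<ominus>\<^bsub>free_alg\<^esub> f \<in> carrier free_alg" using rc fc by simp
  have "rep C = (rep C \<ominus>\<^bsub>free_alg\<^esub> f) \<oplus>\<^bsub>free_alg\<^esub> f"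
    using rc fc by (simp add: fa_minus fa_add)
  then have "fa_op \<psi> n (rep C) V = fa_op \<psi> n ((rep C \<ominus>\<^bsub>free_alg\<^esub> f) \<oplus>\<^bsub>free_alg\<^esub> f) V" by simp
  also have "\<dots> = fa_op \<psi> n f V"
    using fa_op_add[OF dc fc] fa_op_ideal_a[OF d V] by simp
  finally show ?thesis .
qed

lemma carrier_U_h_a: "carrier U_h_a = {u. \<forall>j. u j \<in> carrier U_a}"
  by (simp add: U_h_a_def series_ring_def)

lemma Uh_op_eq_ser_op:
  assumes u: "u \<in> carrier U_h_a" and s: "\<And>j. s j \<in> u j" and V: "V \<in> Vh_carrier"
  shows "Uh_op \<psi> n u V = ser_op \<psi> n s V"
proof -
  have "fa_op \<psi> n (SOME f. f \<in> u j) V = fa_op \<psi> n (s j) V" for j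
    using rep_act[of "u j" "s j" V \<psi> n] u s V by (auto simp: carrier_U_h_a rep_def)
  then show ?thesis by (simp add: Uh_op_def ser_op_def)
qed

lemma ser_op_Vh:
  assumes s: "\<And>j. s j \<in> carrier free_alg" and V: "V \<in> Vh_carrier"
  shows "ser_op \<psi> n s V \<in> Vh_carrier"
  unfolding Vh_carrier_def
proof (safe)
  fix m
  have fin: "finite {k. fa_op \<psi> n (s j) V (m - j) k \<noteq> 0}" for j
    using fa_op_Vh[OF s V, of \<psi> n j] by (simp add: Vh_carrier_def)
  have "{k. ser_op \<psi> n s V m k \<noteq> 0} \<subseteq> (\<Union>j\<le>m. {k. fa_op \<psi> n (s j) V (m - j) k \<noteq> 0})"
  proof
    fix k assume "k \<in> {k. ser_op \<psi> n s V m k \<noteq> 0}"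
    then have "(\<Sum>j\<le>m. fa_op \<psi> n (s j) V (m - j) k) \<noteq> 0" by (simp add: ser_op_def)
    then obtain j where "j \<in> {..m}" "fa_op \<psi> n (s j) V (m - j) k \<noteq> 0"
      by (meson sum.not_neutral_contains_not_neutral)
    then show "k \<in> (\<Union>j\<le>m. {k. fa_op \<psi> n (s j) V (m - j) k \<noteq> 0})" by auto
  qed
  moreover have "finite (\<Union>j\<le>m. {k. fa_op \<psi> n (s j) V (m - j) k \<noteq> 0})" using fin by auto
  ultimately show "finite {k. ser_op \<psi> n s V m k \<noteq> 0}" by (rule finite_subset)
qed

lemma Uh_op_Vh:
  assumes u: "u \<in> carrier U_h_a" and V: "V \<in> Vh_carrier"
  shows "Uh_op \<psi> n u V \<in> Vh_carrier"
proof -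
  have r: "\<And>j. rep (u j) \<in> u j" and rc: "\<And>j. rep (u j) \<in> carrier free_alg"
    using rep_in u by (auto simp: carrier_U_h_a)
  have "Uh_op \<psi> n u V = ser_op \<psi> n (\<lambda>j. rep (u j)) V" by (rule Uh_op_eq_ser_op[OF u r V])
  then show ?thesis using ser_op_Vh[OF rc V] by simp
qed

lemma Uh_op_zero_vector: "Uh_op \<psi> n u (\<lambda>m k. 0) = (\<lambda>m k. 0)"
  by (simp add: Uh_op_def ser_op_def fa_op_zero)

lemma set_add_mem: "a \<in> A \<Longrightarrow> b \<in> B \<Longrightarrow> a \<oplus>\<^bsub>free_alg\<^esub> b \<in> A <+>\<^bsub>free_alg\<^esub> B"
  by (auto simp: set_add_def set_mult_def)

lemma U_a_add: "x \<oplus>\<^bsub>U_a\<^esub> y = x <+>\<^bsub>free_alg\<^esub> y"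
  by (simp add: U_a_def FactRing_def)

lemma Uh_op_add:
  assumes u: "u \<in> carrier U_h_a" and u': "u' \<in> carrier U_h_a" and V: "V \<in> Vh_carrier"
  shows "Uh_op \<psi> n (u \<oplus>\<^bsub>U_h_a\<^esub> u') V = (\<lambda>m k. Uh_op \<psi> n u V m k + Uh_op \<psi> n u' V m k)"
proof -
  let ?f = "\<lambda>j. rep (u j)" and ?g = "\<lambda>j. rep (u' j)"
  have f: "\<And>j. ?f j \<in> u j" "\<And>j. ?f j \<in> carrier free_alg"
    and g: "\<And>j. ?g j \<in> u' j" "\<And>j. ?g j \<in> carrier free_alg"
    using rep_in u u' by (auto simp: carrier_U_h_a)
  have uu: "u \<oplus>\<^bsub>U_h_a\<^esub> u' \<in> carrier U_h_a" using u u' by simp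
  have mem: "?f j \<oplus>\<^bsub>free_alg\<^esub> ?g j \<in> (u \<oplus>\<^bsub>U_h_a\<^esub> u') j" for j
    using f g by (simp add: U_h_a_def series_ring_def U_a_add set_add_mem)
  have "Uh_op \<psi> n (u \<oplus>\<^bsub>U_h_a\<^esub> u') V = ser_op \<psi> n (\<lambda>j. ?f j \<oplus>\<^bsub>free_alg\<^esub> ?g j) V"
    by (rule Uh_op_eq_ser_op[OF uu mem V])
  also have "\<dots> = (\<lambda>m k. ser_op \<psi> n ?f V m k + ser_op \<psi> n ?g V m k)"
    using f g by (simp add: ser_op_def fa_op_add sum.distrib)
  also have "\<dots> = (\<lambda>m k. Uh_op \<psi> n u V m k + Uh_op \<psi> n u' V m k)"
    using Uh_op_eq_ser_op[OF u f(1) V] Uh_op_eq_ser_op[OF u' g(1) V] by simp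
  finally show ?thesis .
qed

lemma Uh_op_zero:
  assumes V: "V \<in> Vh_carrier"
  shows "Uh_op \<psi> n \<zero>\<^bsub>U_h_a\<^esub> V = (\<lambda>m k. 0)"
proof -
  have z: "\<zero>\<^bsub>U_h_a\<^esub> j = ideal_a" for j
    by (simp add: U_h_a_def series_ring_def U_a_def FactRing_def)
  have "\<zero>\<^bsub>free_alg\<^esub> \<in> (\<zero>\<^bsub>U_h_a\<^esub> :: nat \<Rightarrow> (gen list \<Rightarrow> 'a) set) j" for j
    using additive_subgroup.zero_closed[OF ideal.axioms(1)[OF ideal_ideal_a]] by (simp add: z)
  then have "Uh_op \<psi> n \<zero>\<^bsub>U_h_a\<^esub> V = ser_op \<psi> n (\<lambda>j. \<zero>\<^bsub>free_alg\<^esub>) V"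
    by (intro Uh_op_eq_ser_op[OF UHA.zero_closed _ V])
  also have "\<dots> = (\<lambda>m k. 0)"
    by (simp add: ser_op_def fa_op_def fa_zero)
  finally show ?thesis .
qed

lemma rcos_U_a_hom_ring: "ring_hom_ring free_alg U_a (\<lambda>f. ideal_a +>\<^bsub>free_alg\<^esub> f)"
  unfolding U_a_def by (rule ideal.rcos_ring_hom_ring[OF ideal_ideal_a])

lemma ser_op_convolution:
  assumes f: "\<And>j. f j \<in> carrier free_alg" and g: "\<And>j. g j \<in> carrier free_alg"
  shows "ser_op \<psi> n (\<lambda>j. finsum free_alg (\<lambda>i. f i \<otimes>\<^bsub>free_alg\<^esub> g (j - i)) {..j}) V
       = ser_op \<psi> n f (ser_op \<psi> n g V)"
proof (intro ext)
  fix m k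
  let ?A = "\<lambda>i l. fa_op \<psi> n (f i) (fa_op \<psi> n (g l) V) (m - i - l) k"
  have "ser_op \<psi> n (\<lambda>j. finsum free_alg (\<lambda>i. f i \<otimes>\<^bsub>free_alg\<^esub> g (j - i)) {..j}) V m k
      = (\<Sum>j\<le>m. \<Sum>i\<le>j. fa_op \<psi> n (f i \<otimes>\<^bsub>free_alg\<^esub> g (j - i)) V (m - j) k)"
    using f g by (simp add: ser_op_def fa_op_finsum)
  also have "\<dots> = (\<Sum>j\<le>m. \<Sum>i\<le>j. ?A i (j - i))"
    using f g by (intro sum.cong refl) (simp add: fa_op_mult)
  also have "\<dots> = (\<Sum>(i,l)\<in>{(i,l). i + l \<le> m}. ?A i l)"
    by (rule sum.triangle_reindex_eq[symmetric])
  also have "{(i,l). i + l \<le> m} = Sigma {..m} (\<lambda>i. {..m - i})" by auto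
  also have "(\<Sum>(i,l)\<in>Sigma {..m} (\<lambda>i. {..m - i}). ?A i l) = (\<Sum>i\<le>m. \<Sum>l\<le>m - i. ?A i l)"
    by (rule sum.Sigma[symmetric]) auto
  also have "\<dots> = (\<Sum>i\<le>m. fa_op \<psi> n (f i) (ser_op \<psi> n g V) (m - i) k)"
    using fa_op_convolution[of \<psi> n "f _" "\<lambda>l. fa_op \<psi> n (g l) V"]
    by (simp add: ser_op_def diff_diff_add)
  also have "\<dots> = ser_op \<psi> n f (ser_op \<psi> n g V) m k" by (simp add: ser_op_def)
  finally show "ser_op \<psi> n (\<lambda>j. finsum free_alg (\<lambda>i. f i \<otimes>\<^bsub>free_alg\<^esub> g (j - i)) {..j}) V m k
      = ser_op \<psi> n f (ser_op \<psi> n g V) m k" .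
qed

lemma U_h_a_mult_repr:
  assumes u: "u \<in> carrier U_h_a" and u': "u' \<in> carrier U_h_a"
    and f: "\<And>j. f j \<in> u j" and g: "\<And>j. g j \<in> u' j"
  shows "finsum free_alg (\<lambda>i. f i \<otimes>\<^bsub>free_alg\<^esub> g (j - i)) {..j} \<in> (u \<otimes>\<^bsub>U_h_a\<^esub> u') j"
proof -
  have uc: "\<And>j. u j \<in> carrier U_a" and u'c: "\<And>j. u' j \<in> carrier U_a"
    using u u' by (auto simp: carrier_U_h_a)
  have fc: "\<And>j. f j \<in> carrier free_alg" and gc: "\<And>j. g j \<in> carrier free_alg"
    using U_a_coset_repr(1)[OF uc f] U_a_coset_repr(1)[OF u'c g] by auto
  have uf: "\<And>j. u j = ideal_a +>\<^bsub>free_alg\<^esub> f j" and ug: "\<And>j. u' j = ideal_a +>\<^bsub>free_alg\<^esub> g j"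
    using U_a_coset_repr(2)[OF uc f] U_a_coset_repr(2)[OF u'c g] by auto
  let ?F = "finsum free_alg (\<lambda>i. f i \<otimes>\<^bsub>free_alg\<^esub> g (j - i)) {..j}"
  have "ideal_a +>\<^bsub>free_alg\<^esub> ?F
     = finsum U_a ((\<lambda>f. ideal_a +>\<^bsub>free_alg\<^esub> f) \<circ> (\<lambda>i. f i \<otimes>\<^bsub>free_alg\<^esub> g (j - i))) {..j}"
    using fc gc by (intro ring_hom_ring.hom_finsum[OF rcos_U_a_hom_ring]) (auto simp: Pi_def)
  also have "\<dots> = finsum U_a (\<lambda>i. u i \<otimes>\<^bsub>U_a\<^esub> u' (j - i)) {..j}"
    using uc u'c ring_hom_mult[OF ring_hom_ring.homh[OF rcos_U_a_hom_ring] fc gc]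
    by (intro UA.finsum_cong) (auto simp: Pi_def uf ug)
  also have "\<dots> = (u \<otimes>\<^bsub>U_h_a\<^esub> u') j" by (simp add: U_h_a_def series_ring_def)
  finally have "ideal_a +>\<^bsub>free_alg\<^esub> ?F = (u \<otimes>\<^bsub>U_h_a\<^esub> u') j" .
  moreover have "?F \<in> carrier free_alg"
    using fc gc by (intro FA.finsum_closed) (auto simp: Pi_def)
  ultimately show ?thesis using rcos_self_ideal_a by blast
qed

lemma Uh_op_mult:
  assumes u: "u \<in> carrier U_h_a" and u': "u' \<in> carrier U_h_a" and V: "V \<in> Vh_carrier"
  shows "Uh_op \<psi> n (u \<otimes>\<^bsub>U_h_a\<^esub> u') V = Uh_op \<psi> n u (Uh_op \<psi> n u' V)"
proof -
  let ?f = "\<lambda>j. rep (u j)" and ?g = "\<lambda>j. rep (u' j)"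
  have f: "\<And>j. ?f j \<in> u j" "\<And>j. ?f j \<in> carrier free_alg"
    and g: "\<And>j. ?g j \<in> u' j" "\<And>j. ?g j \<in> carrier free_alg"
    using rep_in u u' by (auto simp: carrier_U_h_a)
  have "Uh_op \<psi> n (u \<otimes>\<^bsub>U_h_a\<^esub> u') V
      = ser_op \<psi> n (\<lambda>j. finsum free_alg (\<lambda>i. ?f i \<otimes>\<^bsub>free_alg\<^esub> ?g (j - i)) {..j}) V"
    using u u' V f(1) g(1) by (intro Uh_op_eq_ser_op U_h_a_mult_repr) auto
  also have "\<dots> = ser_op \<psi> n ?f (ser_op \<psi> n ?g V)"
    using f(2) g(2) by (rule ser_op_convolution)
  also have "\<dots> = Uh_op \<psi> n u (Uh_op \<psi> n u' V)"
    using Uh_op_eq_ser_op[OF u' g(1) V] Uh_op_eq_ser_op[OF u f(1) ser_op_Vh[OF g(2) V]] by simp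
  finally show ?thesis .
qed

lemma ann_ideal: "ideal (ann \<psi>) U_h_a"
proof (rule idealI_closed[OF UHA.ring_axioms])
  show "ann \<psi> \<subseteq> carrier U_h_a" by (auto simp: ann_def)
  show "\<zero>\<^bsub>U_h_a\<^esub> \<in> ann \<psi>" by (auto simp: ann_def Uh_op_zero)
next
  fix a b assume "a \<in> ann \<psi>" "b \<in> ann \<psi>"
  then show "a \<oplus>\<^bsub>U_h_a\<^esub> b \<in> ann \<psi>" by (auto simp: ann_def Uh_op_add)
next
  fix a assume a: "a \<in> ann \<psi>"
  then have ac: "a \<in> carrier U_h_a" by (simp add: ann_def)
  have "Uh_op \<psi> n (\<ominus>\<^bsub>U_h_a\<^esub> a) V = (\<lambda>m k. 0)" if V: "V \<in> Vh_carrier" for n V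
  proof -
    have "(\<lambda>m k. Uh_op \<psi> n (\<ominus>\<^bsub>U_h_a\<^esub> a) V m k + Uh_op \<psi> n a V m k) = Uh_op \<psi> n (\<ominus>\<^bsub>U_h_a\<^esub> a \<oplus>\<^bsub>U_h_a\<^esub> a) V"
      using Uh_op_add[OF UHA.a_inv_closed[OF ac] ac V] by simp
    also have "\<dots> = (\<lambda>m k. 0)" using ac by (simp add: UHA.l_neg Uh_op_zero[OF V])
    finally show ?thesis using a V by (simp add: ann_def)
  qed
  then show "\<ominus>\<^bsub>U_h_a\<^esub> a \<in> ann \<psi>" using ac by (simp add: ann_def)
next
  fix a x :: "nat \<Rightarrow> (gen list \<Rightarrow> 'a) set"
  assume a: "a \<in> ann \<psi>" and x: "x \<in> carrier U_h_a"
  then have ac: "a \<in> carrier U_h_a" by (simp add: ann_def)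
  show "x \<otimes>\<^bsub>U_h_a\<^esub> a \<in> ann \<psi>" using a x ac
    by (auto simp: ann_def Uh_op_mult Uh_op_zero_vector)
  show "a \<otimes>\<^bsub>U_h_a\<^esub> x \<in> ann \<psi>" using a x ac
    by (auto simp: ann_def Uh_op_mult Uh_op_Vh)
qed

section \<open>PBW spanning in U(sl2)\<close>

definition sl2_cls :: "(gen list \<Rightarrow> 'k::field) \<Rightarrow> (gen list \<Rightarrow> 'k) set" where
  "sl2_cls f = ideal_sl2 +>\<^bsub>free_alg\<^esub> f"

definition sl2_word :: "gen list \<Rightarrow> (gen list \<Rightarrow> 'k::field) set" where
  "sl2_word u = sl2_cls (word_el u)"

definition sl2_scalar :: "'k::field \<Rightarrow> (gen list \<Rightarrow> 'k) set" where
  "sl2_scalar c = sl2_cls (fa_const c)"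

definition pbw_word :: "nat \<times> nat \<times> nat \<Rightarrow> gen list" where
  "pbw_word t = (case t of (a, b, c) \<Rightarrow> replicate a GXm @ replicate b GH @ replicate c GXp)"

definition pbw_span :: "(gen list \<Rightarrow> 'k::field) set set" where
  "pbw_span = {C. \<exists>g\<in>carrier free_alg. fsupp g \<subseteq> range pbw_word \<and> C = sl2_cls g}"

abbreviation sl2_Xm :: "(gen list \<Rightarrow> 'k::field) set" where "sl2_Xm \<equiv> sl2_word [GXm]"

abbreviation sl2_H :: "(gen list \<Rightarrow> 'k::field) set" where "sl2_H \<equiv> sl2_word [GH]"

abbreviation sl2_Xp :: "(gen list \<Rightarrow> 'k::field) set" where "sl2_Xp \<equiv> sl2_word [GXp]"

interpretation US: ring "U_sl2 :: (gen list \<Rightarrow> 'k::field) set ring"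
  by (rule ring_U_sl2)

lemma sl2_cls_hom: "sl2_cls \<in> ring_hom free_alg U_sl2"
  using rcos_sl2_hom unfolding sl2_cls_def by (simp add: comp_def)

lemma sl2_cls_carrier[simp]: "f \<in> carrier free_alg \<Longrightarrow> sl2_cls f \<in> carrier U_sl2"
  using ring_hom_closed[OF sl2_cls_hom] .

lemma sl2_cls_mult: "f \<in> carrier free_alg \<Longrightarrow> g \<in> carrier free_alg \<Longrightarrow>
  sl2_cls (f \<otimes>\<^bsub>free_alg\<^esub> g) = sl2_cls f \<otimes>\<^bsub>U_sl2\<^esub> sl2_cls g"
  by (rule ring_hom_mult[OF sl2_cls_hom])

lemma sl2_cls_add: "f \<in> carrier free_alg \<Longrightarrow> g \<in> carrier free_alg \<Longrightarrow>
  sl2_cls (f \<oplus>\<^bsub>free_alg\<^esub> g) = sl2_cls f \<oplus>\<^bsub>U_sl2\<^esub> sl2_cls g"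
  by (rule ring_hom_add[OF sl2_cls_hom])

lemma sl2_cls_ideal: "f \<in> ideal_sl2 \<Longrightarrow> sl2_cls f = \<zero>\<^bsub>U_sl2\<^esub>"
  unfolding sl2_cls_def by (simp add: FA.a_rcos_zero[OF ideal_ideal_sl2] U_sl2_def FactRing_def)

lemma sl2_word_carrier[simp]: "sl2_word u \<in> carrier U_sl2" by (simp add: sl2_word_def)

lemma sl2_scalar_carrier[simp]: "sl2_scalar c \<in> carrier U_sl2" by (simp add: sl2_scalar_def)

lemma sl2_word_append: "sl2_word (u @ v) = sl2_word u \<otimes>\<^bsub>U_sl2\<^esub> sl2_word v"
  by (simp add: sl2_word_def word_el_mult[symmetric] sl2_cls_mult)

lemma sl2_word_Cons: "sl2_word (g # v) = sl2_word [g] \<otimes>\<^bsub>U_sl2\<^esub> sl2_word v"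
  using sl2_word_append[of "[g]" v] by simp

lemma sl2_word_Nil: "sl2_word [] = \<one>\<^bsub>U_sl2\<^esub>"
  using ring_hom_one[OF sl2_cls_hom] by (simp add: sl2_word_def fa_one_word)

lemma sl2_scalar_mult_cls: "g \<in> carrier free_alg \<Longrightarrow> sl2_scalar c \<otimes>\<^bsub>U_sl2\<^esub> sl2_cls g = sl2_cls (\<lambda>w. c * g w)"
  by (simp add: sl2_scalar_def sl2_cls_mult[symmetric] fa_const_mult)

lemma sl2_scalar_central: "A \<in> carrier U_sl2 \<Longrightarrow> sl2_scalar c \<otimes>\<^bsub>U_sl2\<^esub> A = A \<otimes>\<^bsub>U_sl2\<^esub> sl2_scalar c"
proof -
  assume "A \<in> carrier U_sl2"
  then obtain f where f: "f \<in> carrier free_alg" "A = sl2_cls f" by (auto simp: carrier_U_sl2 sl2_cls_def)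
  then show ?thesis by (simp add: sl2_scalar_def sl2_cls_mult[symmetric] fa_const_mult fa_mult_const)
qed

lemma sl2_cls_add_ideal:
  fixes f i :: "gen list \<Rightarrow> 'k::field"
  assumes f: "f \<in> carrier free_alg" and i: "i \<in> ideal_sl2"
  shows "sl2_cls (f \<oplus>\<^bsub>free_alg\<^esub> i) = sl2_cls f"
proof -
  have ic: "i \<in> carrier free_alg" using i additive_subgroup.a_subset[OF ideal.axioms(1)[OF ideal_ideal_sl2]] by blast
  have "sl2_cls (f \<oplus>\<^bsub>free_alg\<^esub> i) = sl2_cls f \<oplus>\<^bsub>U_sl2\<^esub> sl2_cls i" by (rule sl2_cls_add[OF f ic])
  also have "sl2_cls i = \<zero>\<^bsub>U_sl2\<^esub>" by (rule sl2_cls_ideal[OF i])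
  finally show ?thesis using f by simp
qed

lemma sl2_Xp_H_comm:
  "(sl2_Xp :: (gen list \<Rightarrow> 'k::field) set) \<otimes>\<^bsub>U_sl2\<^esub> sl2_H
     = sl2_H \<otimes>\<^bsub>U_sl2\<^esub> sl2_Xp \<oplus>\<^bsub>U_sl2\<^esub> sl2_scalar (-2) \<otimes>\<^bsub>U_sl2\<^esub> sl2_Xp"
proof -
  have e: "(word_el [GXp, GH] :: gen list \<Rightarrow> 'k) \<oplus>\<^bsub>free_alg\<^esub> rel_Hp
      = word_el [GH, GXp] \<oplus>\<^bsub>free_alg\<^esub> fa_const (-2) \<otimes>\<^bsub>free_alg\<^esub> word_el [GXp]"
    by (auto simp: fa_add fa_const_mult rel_Hp_def word_el_def fun_eq_iff)
  have "sl2_cls (word_el [GXp, GH] \<oplus>\<^bsub>free_alg\<^esub> rel_Hp) = (sl2_cls (word_el [GXp, GH]) :: (gen list \<Rightarrow> 'k) set)"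
    by (rule sl2_cls_add_ideal) (simp_all add: rels_in_sl2)
  then have "(sl2_word [GXp, GH] :: (gen list \<Rightarrow> 'k) set) = sl2_word [GH, GXp] \<oplus>\<^bsub>U_sl2\<^esub> sl2_scalar (-2) \<otimes>\<^bsub>U_sl2\<^esub> sl2_word [GXp]"
    unfolding e by (simp add: sl2_word_def sl2_scalar_def sl2_cls_add sl2_cls_mult)
  then show ?thesis by (simp add: sl2_word_append[symmetric])
qed

lemma sl2_H_Xm_comm:
  "(sl2_H :: (gen list \<Rightarrow> 'k::field) set) \<otimes>\<^bsub>U_sl2\<^esub> sl2_Xm
     = sl2_Xm \<otimes>\<^bsub>U_sl2\<^esub> sl2_H \<oplus>\<^bsub>U_sl2\<^esub> sl2_scalar (-2) \<otimes>\<^bsub>U_sl2\<^esub> sl2_Xm"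
proof -
  have e: "(word_el [GH, GXm] :: gen list \<Rightarrow> 'k)
      = (word_el [GXm, GH] \<oplus>\<^bsub>free_alg\<^esub> fa_const (-2) \<otimes>\<^bsub>free_alg\<^esub> word_el [GXm]) \<oplus>\<^bsub>free_alg\<^esub> rel_Hm"
    by (auto simp: fa_add fa_const_mult rel_Hm_def word_el_def fun_eq_iff)
  have "(sl2_word [GH, GXm] :: (gen list \<Rightarrow> 'k) set) = sl2_word [GXm, GH] \<oplus>\<^bsub>U_sl2\<^esub> sl2_scalar (-2) \<otimes>\<^bsub>U_sl2\<^esub> sl2_word [GXm]"
    unfolding sl2_word_def by (subst e, subst sl2_cls_add_ideal) (simp_all add: sl2_scalar_def sl2_cls_add sl2_cls_mult rels_in_sl2)
  then show ?thesis by (simp add: sl2_word_append[symmetric])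
qed

lemma sl2_Xp_Xm_comm:
  "(sl2_Xp :: (gen list \<Rightarrow> 'k::field) set) \<otimes>\<^bsub>U_sl2\<^esub> sl2_Xm
     = sl2_Xm \<otimes>\<^bsub>U_sl2\<^esub> sl2_Xp \<oplus>\<^bsub>U_sl2\<^esub> sl2_H"
proof -
  have e: "(word_el [GXp, GXm] :: gen list \<Rightarrow> 'k)
      = (word_el [GXm, GXp] \<oplus>\<^bsub>free_alg\<^esub> word_el [GH]) \<oplus>\<^bsub>free_alg\<^esub> rel_pm"
    by (auto simp: fa_add rel_pm_def word_el_def fun_eq_iff)
  have "(sl2_word [GXp, GXm] :: (gen list \<Rightarrow> 'k) set) = sl2_word [GXm, GXp] \<oplus>\<^bsub>U_sl2\<^esub> sl2_word [GH]"
    unfolding sl2_word_def by (subst e, subst sl2_cls_add_ideal) (simp_all add: sl2_cls_add rels_in_sl2)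
  then show ?thesis by (simp add: sl2_word_append[symmetric])
qed

lemma sl2_cls_hom_ring: "ring_hom_ring free_alg U_sl2 (sl2_cls :: (gen list \<Rightarrow> 'k::field) \<Rightarrow> _)"
proof -
  have e: "(sl2_cls :: (gen list \<Rightarrow> 'k::field) \<Rightarrow> _) = (\<lambda>f. ideal_sl2 +>\<^bsub>free_alg\<^esub> f)" by (simp add: sl2_cls_def fun_eq_iff)
  show ?thesis unfolding U_sl2_def e by (rule ideal.rcos_ring_hom_ring[OF ideal_ideal_sl2])
qed

lemma sl2_cls_eq_finsum:
  fixes g :: "gen list \<Rightarrow> 'k::field"
  assumes g: "g \<in> carrier free_alg" and S: "finite S" "fsupp g \<subseteq> S"
  shows "sl2_cls g = finsum U_sl2 (\<lambda>w. sl2_scalar (g w) \<otimes>\<^bsub>U_sl2\<^esub> sl2_word w) S"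
proof -
  have hc: "\<And>w. fa_const (g w) \<otimes>\<^bsub>free_alg\<^esub> word_el w \<in> carrier free_alg" by simp
  have "finsum free_alg (\<lambda>w. fa_const (g w) \<otimes>\<^bsub>free_alg\<^esub> word_el w) S = (\<lambda>x. \<Sum>w\<in>S. g w * word_el w x)"
    using fa_finsum[OF S(1) hc] by (simp add: fa_const_mult)
  also have "\<dots> = g"
  proof
    fix x
    have "(\<Sum>w\<in>S. g w * word_el w x) = (\<Sum>w\<in>S. if w = x then g x else 0)"
      by (intro sum.cong) (auto simp: word_el_def)
    also have "\<dots> = g x" using S by (auto simp: fsupp_def)
    finally show "(\<Sum>w\<in>S. g w * word_el w x) = g x" .
  qed
  finally have e: "g = finsum free_alg (\<lambda>w. fa_const (g w) \<otimes>\<^bsub>free_alg\<^esub> word_el w) S" ..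
  have "sl2_cls g = finsum U_sl2 (sl2_cls \<circ> (\<lambda>w. fa_const (g w) \<otimes>\<^bsub>free_alg\<^esub> word_el w)) S"
    by (subst e) (rule ring_hom_ring.hom_finsum[OF sl2_cls_hom_ring], auto simp: Pi_def)
  also have "\<dots> = finsum U_sl2 (\<lambda>w. sl2_scalar (g w) \<otimes>\<^bsub>U_sl2\<^esub> sl2_word w) S"
    by (intro US.finsum_cong) (auto simp: Pi_def sl2_cls_mult sl2_scalar_def sl2_word_def)
  finally show ?thesis .
qed

lemma pbw_spanI: "g \<in> carrier free_alg \<Longrightarrow> fsupp g \<subseteq> range pbw_word \<Longrightarrow> sl2_cls g \<in> pbw_span"
  unfolding pbw_span_def by blast

lemma pbw_span_carrier: "C \<in> pbw_span \<Longrightarrow> C \<in> carrier U_sl2"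
  by (auto simp: pbw_span_def)

lemma pbw_span_add: "A \<in> pbw_span \<Longrightarrow> B \<in> pbw_span \<Longrightarrow> A \<oplus>\<^bsub>U_sl2\<^esub> B \<in> pbw_span"
proof -
  assume "A \<in> pbw_span" "B \<in> pbw_span"
  then obtain f g where f: "f \<in> carrier free_alg" "fsupp f \<subseteq> range pbw_word" "A = sl2_cls f"
    and g: "g \<in> carrier free_alg" "fsupp g \<subseteq> range pbw_word" "B = sl2_cls g" by (auto simp: pbw_span_def)
  have "A \<oplus>\<^bsub>U_sl2\<^esub> B = sl2_cls (f \<oplus>\<^bsub>free_alg\<^esub> g)" using f g by (simp add: sl2_cls_add)
  moreover have "fsupp (f \<oplus>\<^bsub>free_alg\<^esub> g) \<subseteq> fsupp f \<union> fsupp g"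
    by (auto simp: fsupp_def fa_add)
  then have "fsupp (f \<oplus>\<^bsub>free_alg\<^esub> g) \<subseteq> range pbw_word" using f g by blast
  ultimately show ?thesis using f g by (simp add: pbw_spanI)
qed

lemma pbw_span_scalar: "A \<in> pbw_span \<Longrightarrow> sl2_scalar c \<otimes>\<^bsub>U_sl2\<^esub> A \<in> pbw_span"
proof -
  assume "A \<in> pbw_span"
  then obtain f where f: "f \<in> carrier free_alg" "fsupp f \<subseteq> range pbw_word" "A = sl2_cls f"
    by (auto simp: pbw_span_def)
  have "sl2_scalar c \<otimes>\<^bsub>U_sl2\<^esub> A = sl2_cls (\<lambda>w. c * f w)" using f by (simp add: sl2_scalar_mult_cls)
  moreover have "fsupp (\<lambda>w. c * f w) \<subseteq> range pbw_word" using f by (auto simp: fsupp_def)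
  ultimately show ?thesis using f fa_scale_carrier pbw_spanI by metis
qed

lemma pbw_span_zero: "(\<zero>\<^bsub>U_sl2\<^esub> :: (gen list \<Rightarrow> 'k::field) set) \<in> pbw_span"
proof -
  have "(\<zero>\<^bsub>U_sl2\<^esub> :: (gen list \<Rightarrow> 'k::field) set) = sl2_cls \<zero>\<^bsub>free_alg\<^esub>" by (rule sym, rule sl2_cls_ideal, rule additive_subgroup.zero_closed[OF ideal.axioms(1)[OF ideal_ideal_sl2]])
  moreover have "fsupp (\<zero>\<^bsub>free_alg\<^esub> :: gen list \<Rightarrow> 'k) \<subseteq> range pbw_word" by (simp add: fsupp_def fa_zero)
  ultimately show ?thesis using pbw_spanI[OF FA.zero_closed] by simp
qed

lemma pbw_word_in_pbw_span: "sl2_word (pbw_word t) \<in> pbw_span"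
proof -
  have "fsupp (word_el (pbw_word t)) \<subseteq> range pbw_word" by (auto simp: fsupp_def word_el_def)
  then show ?thesis unfolding sl2_word_def by (rule pbw_spanI[OF word_el_carrier])
qed

lemma pbw_span_finsum: "finite A \<Longrightarrow> (\<And>i. i \<in> A \<Longrightarrow> F i \<in> pbw_span) \<Longrightarrow> finsum U_sl2 F A \<in> pbw_span"
proof (induction A rule: finite_induct)
  case empty then show ?case by (simp add: pbw_span_zero)
next
  case (insert x A)
  have "finsum U_sl2 F (insert x A) = F x \<oplus>\<^bsub>U_sl2\<^esub> finsum U_sl2 F A"
    using insert pbw_span_carrier by (intro US.finsum_insert) (auto simp: Pi_def)
  then show ?case using insert by (simp add: pbw_span_add)
qed

lemma sl2_mult_scalar_mult:
  "A \<in> carrier U_sl2 \<Longrightarrow> B \<in> carrier U_sl2 \<Longrightarrow>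
   A \<otimes>\<^bsub>U_sl2\<^esub> (sl2_scalar c \<otimes>\<^bsub>U_sl2\<^esub> B) = sl2_scalar c \<otimes>\<^bsub>U_sl2\<^esub> (A \<otimes>\<^bsub>U_sl2\<^esub> B)"
proof -
  assume A: "A \<in> carrier U_sl2" and B: "B \<in> carrier U_sl2"
  have "A \<otimes>\<^bsub>U_sl2\<^esub> (sl2_scalar c \<otimes>\<^bsub>U_sl2\<^esub> B) = (A \<otimes>\<^bsub>U_sl2\<^esub> sl2_scalar c) \<otimes>\<^bsub>U_sl2\<^esub> B"
    using A B by (simp add: US.m_assoc)
  also have "\<dots> = (sl2_scalar c \<otimes>\<^bsub>U_sl2\<^esub> A) \<otimes>\<^bsub>U_sl2\<^esub> B" using sl2_scalar_central[OF A] by simp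
  also have "\<dots> = sl2_scalar c \<otimes>\<^bsub>U_sl2\<^esub> (A \<otimes>\<^bsub>U_sl2\<^esub> B)" using A B by (simp add: US.m_assoc)
  finally show ?thesis .
qed

lemma pbw_span_mult_left:
  assumes G: "G \<in> carrier U_sl2" and GM: "\<And>t. G \<otimes>\<^bsub>U_sl2\<^esub> sl2_word (pbw_word t) \<in> pbw_span" and C: "C \<in> pbw_span"
  shows "G \<otimes>\<^bsub>U_sl2\<^esub> C \<in> pbw_span"
proof -
  obtain g where g: "g \<in> carrier free_alg" "fsupp g \<subseteq> range pbw_word" "C = sl2_cls g"
    using C by (auto simp: pbw_span_def)
  have fin: "finite (fsupp g)" using g by (simp add: fa_carrier)
  have "G \<otimes>\<^bsub>U_sl2\<^esub> C = G \<otimes>\<^bsub>U_sl2\<^esub> finsum U_sl2 (\<lambda>w. sl2_scalar (g w) \<otimes>\<^bsub>U_sl2\<^esub> sl2_word w) (fsupp g)"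
    using sl2_cls_eq_finsum[OF g(1) fin] g by simp
  also have "\<dots> = finsum U_sl2 (\<lambda>w. G \<otimes>\<^bsub>U_sl2\<^esub> (sl2_scalar (g w) \<otimes>\<^bsub>U_sl2\<^esub> sl2_word w)) (fsupp g)"
    using G fin by (simp add: US.finsum_rdistr Pi_def)
  also have "\<dots> = finsum U_sl2 (\<lambda>w. sl2_scalar (g w) \<otimes>\<^bsub>U_sl2\<^esub> (G \<otimes>\<^bsub>U_sl2\<^esub> sl2_word w)) (fsupp g)"
    using G by (intro US.finsum_cong) (auto simp: Pi_def sl2_mult_scalar_mult)
  also have "\<dots> \<in> pbw_span"
  proof (rule pbw_span_finsum[OF fin])
    fix w assume "w \<in> fsupp g"
    then obtain t where wt: "w = pbw_word t" using g by auto
    show "sl2_scalar (g w) \<otimes>\<^bsub>U_sl2\<^esub> (G \<otimes>\<^bsub>U_sl2\<^esub> sl2_word w) \<in> pbw_span" unfolding wt by (rule pbw_span_scalar[OF GM])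
  qed
  finally show ?thesis .
qed

lemma pbw_word_Suc_Xm: "pbw_word (Suc a, b, c) = GXm # pbw_word (a, b, c)"
  by (simp add: pbw_word_def)

lemma pbw_span_Xm_mult: "C \<in> pbw_span \<Longrightarrow> (sl2_Xm :: (gen list \<Rightarrow> 'k::field) set) \<otimes>\<^bsub>U_sl2\<^esub> C \<in> pbw_span"
proof (rule pbw_span_mult_left[OF sl2_word_carrier])
  fix t :: "nat \<times> nat \<times> nat"
  obtain a b c where t: "t = (a, b, c)" by (cases t) auto
  have e: "(sl2_Xm :: (gen list \<Rightarrow> 'k::field) set) \<otimes>\<^bsub>U_sl2\<^esub> sl2_word (pbw_word t) = sl2_word (pbw_word (Suc a, b, c))"
    by (simp add: t pbw_word_Suc_Xm sl2_word_Cons[symmetric])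
  show "(sl2_Xm :: (gen list \<Rightarrow> 'k::field) set) \<otimes>\<^bsub>U_sl2\<^esub> sl2_word (pbw_word t) \<in> pbw_span" unfolding e by (rule pbw_word_in_pbw_span)
qed

lemma sl2_H_mult_pbw_word: "(sl2_H :: (gen list \<Rightarrow> 'k::field) set) \<otimes>\<^bsub>U_sl2\<^esub> sl2_word (pbw_word (a, b, c)) \<in> pbw_span"
proof (induction a)
  case 0
  have "(sl2_H :: (gen list \<Rightarrow> 'k::field) set) \<otimes>\<^bsub>U_sl2\<^esub> sl2_word (pbw_word (0, b, c)) = sl2_word (pbw_word (0, Suc b, c))"
    by (simp add: pbw_word_def sl2_word_Cons[symmetric])
  then show ?case by (metis pbw_word_in_pbw_span)
next
  case (Suc a)
  let ?M = "sl2_word (pbw_word (a, b, c)) :: (gen list \<Rightarrow> 'k::field) set"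
  have XM: "sl2_Xm \<otimes>\<^bsub>U_sl2\<^esub> ?M = sl2_word (pbw_word (Suc a, b, c))"
    by (simp add: pbw_word_Suc_Xm sl2_word_Cons[symmetric])
  have "sl2_H \<otimes>\<^bsub>U_sl2\<^esub> sl2_word (pbw_word (Suc a, b, c)) = sl2_H \<otimes>\<^bsub>U_sl2\<^esub> (sl2_Xm \<otimes>\<^bsub>U_sl2\<^esub> ?M)"
    by (simp only: XM)
  also have "\<dots> = (sl2_H \<otimes>\<^bsub>U_sl2\<^esub> sl2_Xm) \<otimes>\<^bsub>U_sl2\<^esub> ?M" by (simp add: US.m_assoc)
  also have "\<dots> = (sl2_Xm \<otimes>\<^bsub>U_sl2\<^esub> sl2_H \<oplus>\<^bsub>U_sl2\<^esub> sl2_scalar (-2) \<otimes>\<^bsub>U_sl2\<^esub> sl2_Xm) \<otimes>\<^bsub>U_sl2\<^esub> ?M"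
    by (simp add: sl2_H_Xm_comm)
  also have "\<dots> = sl2_Xm \<otimes>\<^bsub>U_sl2\<^esub> (sl2_H \<otimes>\<^bsub>U_sl2\<^esub> ?M) \<oplus>\<^bsub>U_sl2\<^esub> sl2_scalar (-2) \<otimes>\<^bsub>U_sl2\<^esub> (sl2_Xm \<otimes>\<^bsub>U_sl2\<^esub> ?M)"
    by (simp add: US.l_distr US.m_assoc)
  also have "\<dots> \<in> pbw_span"
  proof (rule pbw_span_add)
    show "(sl2_Xm :: (gen list \<Rightarrow> 'k::field) set) \<otimes>\<^bsub>U_sl2\<^esub> (sl2_H \<otimes>\<^bsub>U_sl2\<^esub> ?M) \<in> pbw_span" by (rule pbw_span_Xm_mult[OF Suc])
    show "sl2_scalar (-2) \<otimes>\<^bsub>U_sl2\<^esub> (sl2_Xm \<otimes>\<^bsub>U_sl2\<^esub> ?M) \<in> pbw_span"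
      unfolding XM by (rule pbw_span_scalar[OF pbw_word_in_pbw_span])
  qed
  finally show ?case .
qed

lemma pbw_span_H_mult: "C \<in> pbw_span \<Longrightarrow> (sl2_H :: (gen list \<Rightarrow> 'k::field) set) \<otimes>\<^bsub>U_sl2\<^esub> C \<in> pbw_span"
proof (rule pbw_span_mult_left[OF sl2_word_carrier])
  fix t :: "nat \<times> nat \<times> nat"
  obtain a b c where t: "t = (a, b, c)" by (cases t) auto
  show "(sl2_H :: (gen list \<Rightarrow> 'k::field) set) \<otimes>\<^bsub>U_sl2\<^esub> sl2_word (pbw_word t) \<in> pbw_span" unfolding t by (rule sl2_H_mult_pbw_word)
qed

lemma sl2_word_Xm_Xp_H_Xp_in_pbw_span: "(sl2_word (replicate a GXm @ GXp # replicate b GH @ replicate c GXp) :: (gen list \<Rightarrow> 'k::field) set) \<in> pbw_span"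
proof (induction b arbitrary: a)
  case 0
  have "replicate a GXm @ GXp # replicate 0 GH @ replicate c GXp = pbw_word (a, 0, Suc c)"
    by (simp add: pbw_word_def)
  then show ?case using pbw_word_in_pbw_span by simp
next
  case (Suc b)
  let ?R = "sl2_word (replicate b GH @ replicate c GXp) :: (gen list \<Rightarrow> 'k::field) set"
  have E: "sl2_Xp \<otimes>\<^bsub>U_sl2\<^esub> ?R \<in> pbw_span" using Suc[of 0] by (simp add: sl2_word_Cons[symmetric])
  have D: "sl2_word (replicate a' GXm) \<otimes>\<^bsub>U_sl2\<^esub> sl2_H \<otimes>\<^bsub>U_sl2\<^esub> (sl2_Xp \<otimes>\<^bsub>U_sl2\<^esub> ?R) \<in> pbw_span" for a'
  proof (induction a')
    case 0 then show ?case using pbw_span_H_mult[OF E] by (simp add: sl2_word_Nil)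
  next
    case (Suc a')
    have "sl2_word (replicate (Suc a') GXm) \<otimes>\<^bsub>U_sl2\<^esub> sl2_H \<otimes>\<^bsub>U_sl2\<^esub> (sl2_Xp \<otimes>\<^bsub>U_sl2\<^esub> ?R)
      = sl2_Xm \<otimes>\<^bsub>U_sl2\<^esub> (sl2_word (replicate a' GXm) \<otimes>\<^bsub>U_sl2\<^esub> sl2_H \<otimes>\<^bsub>U_sl2\<^esub> (sl2_Xp \<otimes>\<^bsub>U_sl2\<^esub> ?R))"
      by (simp add: sl2_word_Cons[symmetric] sl2_word_append[symmetric] US.m_assoc)
    then show ?case using pbw_span_Xm_mult[OF Suc] by simp
  qed
  have "sl2_word (replicate a GXm @ GXp # replicate (Suc b) GH @ replicate c GXp)
      = sl2_word (replicate a GXm) \<otimes>\<^bsub>U_sl2\<^esub> (sl2_Xp \<otimes>\<^bsub>U_sl2\<^esub> sl2_H) \<otimes>\<^bsub>U_sl2\<^esub> ?R"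
    by (simp add: sl2_word_append[symmetric] sl2_word_Cons[symmetric] US.m_assoc)
  also have "\<dots> = sl2_word (replicate a GXm) \<otimes>\<^bsub>U_sl2\<^esub> (sl2_H \<otimes>\<^bsub>U_sl2\<^esub> sl2_Xp \<oplus>\<^bsub>U_sl2\<^esub> sl2_scalar (-2) \<otimes>\<^bsub>U_sl2\<^esub> sl2_Xp) \<otimes>\<^bsub>U_sl2\<^esub> ?R"
    by (simp add: sl2_Xp_H_comm)
  also have "\<dots> = sl2_word (replicate a GXm) \<otimes>\<^bsub>U_sl2\<^esub> sl2_H \<otimes>\<^bsub>U_sl2\<^esub> (sl2_Xp \<otimes>\<^bsub>U_sl2\<^esub> ?R)
      \<oplus>\<^bsub>U_sl2\<^esub> sl2_scalar (-2) \<otimes>\<^bsub>U_sl2\<^esub> (sl2_word (replicate a GXm) \<otimes>\<^bsub>U_sl2\<^esub> sl2_Xp \<otimes>\<^bsub>U_sl2\<^esub> ?R)"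
    by (simp add: US.l_distr US.r_distr US.m_assoc sl2_mult_scalar_mult)
  also have "\<dots> \<in> pbw_span"
  proof (rule pbw_span_add[OF D pbw_span_scalar])
    show "sl2_word (replicate a GXm) \<otimes>\<^bsub>U_sl2\<^esub> sl2_Xp \<otimes>\<^bsub>U_sl2\<^esub> ?R \<in> pbw_span"
      using Suc[of a] by (simp add: sl2_word_append[symmetric] sl2_word_Cons[symmetric] US.m_assoc)
  qed
  finally show ?case .
qed

lemma sl2_Xp_mult_pbw_word: "(sl2_Xp :: (gen list \<Rightarrow> 'k::field) set) \<otimes>\<^bsub>U_sl2\<^esub> sl2_word (pbw_word (a, b, c)) \<in> pbw_span"
proof (induction a)
  case 0
  have "(sl2_Xp :: (gen list \<Rightarrow> 'k::field) set) \<otimes>\<^bsub>U_sl2\<^esub> sl2_word (pbw_word (0, b, c))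
     = sl2_word (replicate 0 GXm @ GXp # replicate b GH @ replicate c GXp)"
    by (simp add: pbw_word_def sl2_word_Cons[symmetric])
  then show ?case by (metis sl2_word_Xm_Xp_H_Xp_in_pbw_span)
next
  case (Suc a)
  let ?M = "sl2_word (pbw_word (a, b, c)) :: (gen list \<Rightarrow> 'k::field) set"
  have XM: "sl2_Xm \<otimes>\<^bsub>U_sl2\<^esub> ?M = sl2_word (pbw_word (Suc a, b, c))"
    by (simp add: pbw_word_Suc_Xm sl2_word_Cons[symmetric])
  have "(sl2_Xp :: (gen list \<Rightarrow> 'k::field) set) \<otimes>\<^bsub>U_sl2\<^esub> sl2_word (pbw_word (Suc a, b, c)) = sl2_Xp \<otimes>\<^bsub>U_sl2\<^esub> (sl2_Xm \<otimes>\<^bsub>U_sl2\<^esub> ?M)"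
    by (simp only: XM)
  also have "\<dots> = (sl2_Xp \<otimes>\<^bsub>U_sl2\<^esub> sl2_Xm) \<otimes>\<^bsub>U_sl2\<^esub> ?M" by (simp add: US.m_assoc)
  also have "\<dots> = (sl2_Xm \<otimes>\<^bsub>U_sl2\<^esub> sl2_Xp \<oplus>\<^bsub>U_sl2\<^esub> sl2_H) \<otimes>\<^bsub>U_sl2\<^esub> ?M"
    by (simp add: sl2_Xp_Xm_comm)
  also have "\<dots> = sl2_Xm \<otimes>\<^bsub>U_sl2\<^esub> (sl2_Xp \<otimes>\<^bsub>U_sl2\<^esub> ?M) \<oplus>\<^bsub>U_sl2\<^esub> sl2_H \<otimes>\<^bsub>U_sl2\<^esub> ?M"
    by (simp add: US.l_distr US.m_assoc)
  also have "\<dots> \<in> pbw_span"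
  proof (rule pbw_span_add)
    show "(sl2_Xm :: (gen list \<Rightarrow> 'k::field) set) \<otimes>\<^bsub>U_sl2\<^esub> (sl2_Xp \<otimes>\<^bsub>U_sl2\<^esub> ?M) \<in> pbw_span" by (rule pbw_span_Xm_mult[OF Suc])
    show "(sl2_H :: (gen list \<Rightarrow> 'k::field) set) \<otimes>\<^bsub>U_sl2\<^esub> ?M \<in> pbw_span" by (rule sl2_H_mult_pbw_word)
  qed
  finally show ?case .
qed

lemma pbw_span_Xp_mult: "C \<in> pbw_span \<Longrightarrow> (sl2_Xp :: (gen list \<Rightarrow> 'k::field) set) \<otimes>\<^bsub>U_sl2\<^esub> C \<in> pbw_span"
proof (rule pbw_span_mult_left[OF sl2_word_carrier])
  fix t :: "nat \<times> nat \<times> nat"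
  obtain a b c where t: "t = (a, b, c)" by (cases t) auto
  show "(sl2_Xp :: (gen list \<Rightarrow> 'k::field) set) \<otimes>\<^bsub>U_sl2\<^esub> sl2_word (pbw_word t) \<in> pbw_span" unfolding t by (rule sl2_Xp_mult_pbw_word)
qed

lemma sl2_word_in_pbw_span: "(sl2_word w :: (gen list \<Rightarrow> 'k::field) set) \<in> pbw_span"
proof (induction w)
  case Nil
  have "pbw_word (0, 0, 0) = []" by (simp add: pbw_word_def)
  then have "(sl2_word [] :: (gen list \<Rightarrow> 'k::field) set) = sl2_word (pbw_word (0,0,0))" by simp
  then show ?case using pbw_word_in_pbw_span by metis
next
  case (Cons g w)
  have e: "(sl2_word (g # w) :: (gen list \<Rightarrow> 'k::field) set) = sl2_word [g] \<otimes>\<^bsub>U_sl2\<^esub> sl2_word w" by (rule sl2_word_Cons)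
  have "(sl2_word [g] :: (gen list \<Rightarrow> 'k::field) set) \<otimes>\<^bsub>U_sl2\<^esub> sl2_word w \<in> pbw_span"
  proof (cases g)
    case GXm show ?thesis unfolding GXm by (rule pbw_span_Xm_mult[OF Cons])
  next
    case GH show ?thesis unfolding GH by (rule pbw_span_H_mult[OF Cons])
  next
    case GXp show ?thesis unfolding GXp by (rule pbw_span_Xp_mult[OF Cons])
  qed
  then show ?case unfolding e .
qed

lemma sl2_cls_in_pbw_span: "f \<in> carrier free_alg \<Longrightarrow> (sl2_cls f :: (gen list \<Rightarrow> 'k::field) set) \<in> pbw_span"
proof -
  assume f: "f \<in> carrier free_alg"
  have fin: "finite (fsupp f)" using f by (simp add: fa_carrier)
  have "(sl2_cls f :: (gen list \<Rightarrow> 'k::field) set) = finsum U_sl2 (\<lambda>w. sl2_scalar (f w) \<otimes>\<^bsub>U_sl2\<^esub> sl2_word w) (fsupp f)"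
    by (rule sl2_cls_eq_finsum[OF f fin subset_refl])
  also have "\<dots> \<in> pbw_span" by (rule pbw_span_finsum[OF fin]) (rule pbw_span_scalar[OF sl2_word_in_pbw_span])
  finally show ?thesis .
qed

lemma exists_pbw_representative:
  fixes f :: "gen list \<Rightarrow> 'k::field"
  assumes "f \<in> carrier free_alg"
  shows "\<exists>g. g \<in> carrier free_alg \<and> fsupp g \<subseteq> range pbw_word \<and> f \<ominus>\<^bsub>free_alg\<^esub> g \<in> ideal_sl2"
proof -
  obtain g where g: "g \<in> carrier free_alg" "fsupp g \<subseteq> range pbw_word" "sl2_cls f = sl2_cls g"
    using sl2_cls_in_pbw_span[OF assms] by (auto simp: pbw_span_def)
  have "f \<in> ideal_sl2 +>\<^bsub>free_alg\<^esub> g"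
    using g(3) abelian_subgroup.a_rcos_self[OF abelian_subgroup_ideal_sl2 assms] by (simp add: sl2_cls_def)
  then have "f \<ominus>\<^bsub>free_alg\<^esub> g \<in> ideal_sl2"
    using abelian_subgroup.a_rcos_module_minus[OF abelian_subgroup_ideal_sl2 FA.ring_axioms g(1) assms] by simp
  then show ?thesis using g by blast
qed

section \<open>PBW monomials act independently on the modules V(n)\<close>

abbreviation word_act_cl :: "int \<Rightarrow> gen list \<Rightarrow> (nat \<Rightarrow> 'k::field_char_0) \<Rightarrow> nat \<Rightarrow> 'k" where
  "word_act_cl n \<equiv> word_rep.word_act (act_cl n)"

abbreviation alg_act_cl :: "int \<Rightarrow> (gen list \<Rightarrow> 'k::field_char_0) \<Rightarrow> (nat \<Rightarrow> 'k) \<Rightarrow> nat \<Rightarrow> 'k" where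
  "alg_act_cl n \<equiv> word_rep.alg_act (act_cl n)"

lemma word_act_cl_Nil: "word_act_cl n [] v = v" by (rule word_rep.word_act_Nil[OF word_rep_cl])

lemma word_act_cl_Cons: "word_act_cl n (g # w) v = act_cl n g (word_act_cl n w v)" by (rule word_rep.word_act_Cons[OF word_rep_cl])

lemma word_act_cl_append: "word_act_cl n (u @ w) v = word_act_cl n u (word_act_cl n w v)" by (rule word_rep.word_act_append[OF word_rep_cl])

lemma word_act_cl_Xm_power: "word_act_cl n (replicate a GXm) (\<lambda>k. if k = t then (x::'k::field_char_0) else 0) = (\<lambda>k. if k = t + a then x else 0)"
proof (induction a)
  case 0 then show ?case by (simp add: word_act_cl_Nil)
next
  case (Suc a)
  then show ?case by (auto simp: word_act_cl_Cons fun_eq_iff)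
qed

lemma word_act_cl_H_power: "word_act_cl n (replicate b GH) (\<lambda>k. if k = t then (x::'k::field_char_0) else 0)
   = (\<lambda>k. if k = t then of_int (n - 2 * int t) ^ b * x else 0)"
proof (induction b)
  case 0 then show ?case by (simp add: word_act_cl_Nil fun_eq_iff)
next
  case (Suc b)
  then show ?case by (auto simp: word_act_cl_Cons fun_eq_iff)
qed

definition Xp_power_coeff :: "int \<Rightarrow> nat \<Rightarrow> nat \<Rightarrow> 'k::field_char_0" where
  "Xp_power_coeff n t c = (\<Prod>i<c. of_int (int (t - i) * (n - int (t - i) + 1)))"

lemma word_act_cl_Xp_power: "word_act_cl n (replicate c GXp) (\<lambda>k. if k = t then (x::'k::field_char_0) else 0)
   = (\<lambda>k. if c \<le> t \<and> k = t - c then Xp_power_coeff n t c * x else 0)"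
proof (induction c)
  case 0 then show ?case by (simp add: word_act_cl_Nil Xp_power_coeff_def fun_eq_iff)
next
  case (Suc c)
  have "act_cl n GXp (\<lambda>k. if c \<le> t \<and> k = t - c then Xp_power_coeff n t c * x else 0) k
      = (if Suc c \<le> t \<and> k = t - Suc c then (Xp_power_coeff n t (Suc c) :: 'k) * x else 0)" for k
  proof (cases "Suc c \<le> t \<and> k = t - Suc c")
    case True
    then have k1: "k + 1 = t - c" and ct: "c \<le> t" by auto
    have "int k + 1 = int (t - c)" using k1 by linarith
    moreover have "n - int k = n - int (t - c) + 1" using k1 by linarith
    ultimately have AB: "(of_int ((int k + 1) * (n - int k)) :: 'k) = of_int (int (t - c) * (n - int (t - c) + 1))"
      by (simp only:)
    have PS: "Xp_power_coeff n t (Suc c) = (Xp_power_coeff n t c :: 'k) * of_int (int (t - c) * (n - int (t - c) + 1))"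
      by (simp add: Xp_power_coeff_def)
    have "act_cl n GXp (\<lambda>k. if c \<le> t \<and> k = t - c then Xp_power_coeff n t c * x else 0) k
        = of_int ((int k + 1) * (n - int k)) * (Xp_power_coeff n t c * x)" using k1 ct by simp
    then show ?thesis unfolding AB PS using True by (simp add: ac_simps)
  next
    case False then show ?thesis by auto
  qed
  then show ?case using Suc by (simp add: word_act_cl_Cons fun_eq_iff)
qed

lemma word_act_cl_pbw_word: "word_act_cl n (pbw_word (a, b, c)) (\<lambda>k. if k = j then 1 else 0)
   = (\<lambda>k. if c \<le> j \<and> k = j - c + a then (Xp_power_coeff n j c :: 'k::field_char_0) * of_int (n - 2 * int (j - c)) ^ b else 0)"
proof -
  have "word_act_cl n (replicate c GXp) (\<lambda>k. if k = j then (1::'k) else 0) = (\<lambda>k. if c \<le> j \<and> k = j - c then Xp_power_coeff n j c * 1 else 0)"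
    by (rule word_act_cl_Xp_power)
  show ?thesis
  proof (cases "c \<le> j")
    case True
    have eq1: "word_act_cl n (replicate c GXp) (\<lambda>k. if k = j then (1::'k) else 0) = (\<lambda>k. if k = j - c then Xp_power_coeff n j c else 0)"
      using word_act_cl_Xp_power[of n c j "1::'k"] True by (simp add: fun_eq_iff)
    have eq2: "word_act_cl n (replicate b GH) (\<lambda>k. if k = j - c then (Xp_power_coeff n j c :: 'k) else 0)
        = (\<lambda>k. if k = j - c then of_int (n - 2 * int (j - c)) ^ b * Xp_power_coeff n j c else 0)"
      by (rule word_act_cl_H_power)
    have eq3: "word_act_cl n (replicate a GXm) (\<lambda>k. if k = j - c then of_int (n - 2 * int (j - c)) ^ b * (Xp_power_coeff n j c :: 'k) else 0)
        = (\<lambda>k. if k = j - c + a then of_int (n - 2 * int (j - c)) ^ b * Xp_power_coeff n j c else 0)"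
      by (rule word_act_cl_Xm_power)
    have "word_act_cl n (pbw_word (a, b, c)) (\<lambda>k. if k = j then (1::'k) else 0)
        = word_act_cl n (replicate a GXm) (word_act_cl n (replicate b GH) (word_act_cl n (replicate c GXp) (\<lambda>k. if k = j then (1::'k) else 0)))"
      by (simp add: pbw_word_def word_act_cl_append)
    also have "\<dots> = (\<lambda>k. if k = j - c + a then of_int (n - 2 * int (j - c)) ^ b * (Xp_power_coeff n j c :: 'k) else 0)"
      by (simp only: eq1 eq2 eq3)
    finally show ?thesis using True by (auto simp: fun_eq_iff mult.commute)
  next
    case False
    have "word_act_cl n (replicate c GXp) (\<lambda>k. if k = j then (1::'k) else 0) = (\<lambda>k. 0)"
      using word_act_cl_Xp_power[of n c j "1::'k"] False by (simp add: fun_eq_iff)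
    moreover have "word_act_cl n w (\<lambda>k. 0::'k) = (\<lambda>k. 0)" for w
      by (rule word_rep.word_act_zero[OF word_rep_cl])
    ultimately show ?thesis using False by (simp add: pbw_word_def word_act_cl_append)
  qed
qed

lemma inj_pbw_word: "inj pbw_word"
proof (rule injI)
  fix s t assume e: "pbw_word s = pbw_word t"
  obtain a b c where s: "s = (a, b, c)" by (cases s) auto
  obtain a' b' c' where t: "t = (a', b', c')" by (cases t) auto
  have "length (filter ((=) GXm) (pbw_word s)) = a" "length (filter ((=) GH) (pbw_word s)) = b"
    "length (filter ((=) GXp) (pbw_word s)) = c"
    by (simp_all add: s pbw_word_def filter_replicate)
  moreover have "length (filter ((=) GXm) (pbw_word t)) = a'" "length (filter ((=) GH) (pbw_word t)) = b'"
    "length (filter ((=) GXp) (pbw_word t)) = c'"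
    by (simp_all add: t pbw_word_def filter_replicate)
  ultimately show "s = t" using e s t by simp
qed

lemma Xp_power_coeff_nonzero:
  assumes "n \<ge> int c"
  shows "(Xp_power_coeff n c c :: 'k::field_char_0) \<noteq> 0"
proof -
  have pos: "int (c - i) * (n - int (c - i) + 1) > 0" if "i < c" for i
    using that assms by (intro mult_pos_pos) auto
  have "(Xp_power_coeff n c c :: 'k) = of_int (\<Prod>i<c. int (c - i) * (n - int (c - i) + 1))"
    by (simp add: Xp_power_coeff_def)
  moreover have "(\<Prod>i<c. int (c - i) * (n - int (c - i) + 1)) > 0"
    using pos by (intro prod_pos) auto
  ultimately show ?thesis by (metis of_int_eq_0_iff order_less_irrefl)
qed

lemma alg_act_cl_pbw_lowest:
  fixes g :: "gen list \<Rightarrow> 'k::field_char_0"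
  assumes fin: "finite T" and supp: "fsupp g = pbw_word ` T"
    and j: "\<And>a b c. (a, b, c) \<in> T \<Longrightarrow> j \<le> c"
  shows "alg_act_cl n g (\<lambda>k. if k = j then 1 else 0) i
       = Xp_power_coeff n j j * (\<Sum>b\<in>{b. (i, b, j) \<in> T}. g (pbw_word (i, b, j)) * of_int n ^ b)"
proof -
  let ?e = "\<lambda>k. if k = j then (1::'k) else 0"
  let ?G = "\<lambda>t. Xp_power_coeff n j j * (g (pbw_word t) * of_int n ^ (fst (snd t)))"
  have inj: "inj_on pbw_word T" by (rule inj_on_subset[OF inj_pbw_word subset_UNIV])
  have "alg_act_cl n g ?e i = (\<Sum>w\<in>fsupp g. g w * word_act_cl n w ?e i)"
    by (simp add: word_rep.alg_act_def[OF word_rep_cl])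
  also have "\<dots> = (\<Sum>t\<in>T. g (pbw_word t) * word_act_cl n (pbw_word t) ?e i)"
    unfolding supp by (rule sum.reindex[OF inj, unfolded comp_def])
  also have "\<dots> = (\<Sum>t\<in>T. if fst t = i \<and> snd (snd t) = j then ?G t else 0)"
  proof (rule sum.cong[OF refl])
    fix t assume tT: "t \<in> T"
    obtain a b c where t: "t = (a, b, c)" by (cases t) auto
    have "j \<le> c" using j tT t by simp
    then show "g (pbw_word t) * word_act_cl n (pbw_word t) ?e i
        = (if fst t = i \<and> snd (snd t) = j then ?G t else 0)"
      unfolding t word_act_cl_pbw_word by (auto simp: ac_simps)
  qed
  also have "\<dots> = sum ?G {t\<in>T. fst t = i \<and> snd (snd t) = j}"
    by (rule sum.inter_filter[symmetric, OF fin])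
  also have "{t\<in>T. fst t = i \<and> snd (snd t) = j} = (\<lambda>b. (i, b, j)) ` {b. (i, b, j) \<in> T}"
    by auto
  also have "sum ?G \<dots> = (\<Sum>b\<in>{b. (i, b, j) \<in> T}. Xp_power_coeff n j j * (g (pbw_word (i, b, j)) * of_int n ^ b))"
    by (subst sum.reindex) (auto simp: inj_on_def)
  finally show ?thesis by (simp add: sum_distrib_left)
qed

lemma pbw_combination_annihilating_cl_is_zero:
  fixes g :: "gen list \<Rightarrow> 'k::field_char_0"
  assumes g: "g \<in> carrier free_alg" "fsupp g \<subseteq> range pbw_word"
    and K: "\<And>n. g \<in> word_rep.annihilator (act_cl n) Fin_cl"
  shows "g = (\<lambda>w. 0)"
proof (rule ccontr)
  assume "g \<noteq> (\<lambda>w. 0)"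
  let ?T = "{t. g (pbw_word t) \<noteq> 0}"
  have supp: "fsupp g = pbw_word ` ?T" using g(2) by (auto simp: fsupp_def)
  then have finT: "finite ?T"
    using g(1) by (auto simp: fa_carrier intro: finite_imageD inj_on_subset[OF inj_pbw_word])
  have "fsupp g \<noteq> {}" using \<open>g \<noteq> (\<lambda>w. 0)\<close> by (auto simp: fsupp_def)
  then have "?T \<noteq> {}" unfolding supp by blast
  define c0 where "c0 = Min ((\<lambda>t. snd (snd t)) ` ?T)"
  have "c0 \<in> (\<lambda>t. snd (snd t)) ` ?T" unfolding c0_def using finT \<open>?T \<noteq> {}\<close> by (intro Min_in) auto
  then obtain a0 b0 where t0: "(a0, b0, c0) \<in> ?T" by force
  have c0_min: "c0 \<le> c" if "(a, b, c) \<in> ?T" for a b c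
    unfolding c0_def using finT that by (intro Min_le) force+
  let ?B = "{b. (a0, b, c0) \<in> ?T}"
  have "finite ?B"
    using finite_vimageI[OF finT, of "\<lambda>b. (a0, b, c0)"] by (simp add: inj_on_def vimage_def)
  moreover have "(\<Sum>b\<in>?B. g (pbw_word (a0, b, c0)) * of_int n ^ b) = 0" if n: "n \<ge> int c0" for n
  proof -
    have "(\<lambda>k. if k = c0 then 1 else 0 :: 'k) \<in> Fin_cl" by (simp add: Fin_cl_def)
    then have "alg_act_cl n g (\<lambda>k. if k = c0 then 1 else 0) = (\<lambda>i. 0)"
      using K[of n] by (simp add: word_rep.annihilator_def[OF word_rep_cl])
    then have "Xp_power_coeff n c0 c0 * (\<Sum>b\<in>?B. g (pbw_word (a0, b, c0)) * of_int n ^ b) = 0"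
      using alg_act_cl_pbw_lowest[OF finT supp c0_min, where n = n and i = a0] by simp
    then show ?thesis using Xp_power_coeff_nonzero[OF n, where 'k = 'k] by simp
  qed
  moreover have "b0 \<in> ?B" using t0 by blast
  ultimately have "g (pbw_word (a0, b0, c0)) = 0"
    by (rule coeff_zero_if_vanishes_on_int_ray)
  then show False using t0 by simp
qed

lemma annihilating_cl_imp_ideal_sl2:
  fixes f :: "gen list \<Rightarrow> 'k::field_char_0"
  assumes f: "f \<in> carrier free_alg" and K: "\<And>n. f \<in> word_rep.annihilator (act_cl n) Fin_cl"
  shows "f \<in> ideal_sl2"
proof -
  obtain g where g: "g \<in> carrier free_alg" "fsupp g \<subseteq> range pbw_word" "f \<ominus>\<^bsub>free_alg\<^esub> g \<in> ideal_sl2"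
    using exists_pbw_representative[OF f] by blast
  have gK: "g \<in> word_rep.annihilator (act_cl n) Fin_cl" for n
  proof -
    interpret I: ideal "word_rep.annihilator (act_cl n) Fin_cl" free_alg by (rule word_rep.annihilator_ideal[OF word_rep_cl])
    have h: "f \<ominus>\<^bsub>free_alg\<^esub> g \<in> word_rep.annihilator (act_cl n) Fin_cl" using g(3) ideal_sl2_annihilates_cl by blast
    have hc: "f \<ominus>\<^bsub>free_alg\<^esub> g \<in> carrier free_alg" using f g by simp
    have "g = f \<ominus>\<^bsub>free_alg\<^esub> (f \<ominus>\<^bsub>free_alg\<^esub> g)"
      using f g hc by (simp add: fa_minus)
    also have "\<dots> \<in> word_rep.annihilator (act_cl n) Fin_cl"
      using K[of n] h by (simp add: a_minus_def I.a_closed I.a_inv_closed)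
    finally show ?thesis .
  qed
  have "g = (\<lambda>w. 0)" by (rule pbw_combination_annihilating_cl_is_zero[OF g(1,2) gK])
  then have "f \<ominus>\<^bsub>free_alg\<^esub> g = f" using f g by (simp add: fa_minus)
  then show ?thesis using g(3) by simp
qed

section \<open>The homomorphism U_h(psi)/hU_h(psi) \<rightarrow> U(sl2)\<close>

definition const_term_sl2 :: "(nat \<Rightarrow> (gen list \<Rightarrow> 'k::field) set) \<Rightarrow> (gen list \<Rightarrow> 'k) set" where
  "const_term_sl2 u = str_sl2 (u 0)"

lemma U_h_a_mult_const_term: "u \<in> carrier U_h_a \<Longrightarrow> v \<in> carrier U_h_a \<Longrightarrow>
   (u \<otimes>\<^bsub>U_h_a\<^esub> v) 0 = u 0 \<otimes>\<^bsub>U_a\<^esub> v 0"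
  by (simp add: U_h_a_def series_ring_def carrier_U_h_a[unfolded U_h_a_def])

lemma const_term_sl2_hom: "(const_term_sl2 :: _ \<Rightarrow> (gen list \<Rightarrow> 'k::field) set) \<in> ring_hom U_h_a U_sl2"
proof (rule ring_hom_memI)
  fix u :: "nat \<Rightarrow> (gen list \<Rightarrow> 'k) set" assume "u \<in> carrier U_h_a"
  then have "u 0 \<in> carrier U_a" by (simp add: carrier_U_h_a)
  then show "const_term_sl2 u \<in> carrier U_sl2"
    unfolding const_term_sl2_def by (rule ring_hom_closed[OF str_sl2_hom])
next
  fix u v :: "nat \<Rightarrow> (gen list \<Rightarrow> 'k) set" assume u: "u \<in> carrier U_h_a" and v: "v \<in> carrier U_h_a"
  have u0: "u 0 \<in> carrier U_a" and v0: "v 0 \<in> carrier U_a" using u v by (auto simp: carrier_U_h_a)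
  show "const_term_sl2 (u \<otimes>\<^bsub>U_h_a\<^esub> v) = const_term_sl2 u \<otimes>\<^bsub>U_sl2\<^esub> const_term_sl2 v"
    using U_h_a_mult_const_term[OF u v] ring_hom_mult[OF str_sl2_hom u0 v0] by (simp add: const_term_sl2_def)
  have "(u \<oplus>\<^bsub>U_h_a\<^esub> v) 0 = u 0 \<oplus>\<^bsub>U_a\<^esub> v 0" by (simp add: U_h_a_def series_ring_def)
  then show "const_term_sl2 (u \<oplus>\<^bsub>U_h_a\<^esub> v) = const_term_sl2 u \<oplus>\<^bsub>U_sl2\<^esub> const_term_sl2 v"
    using ring_hom_add[OF str_sl2_hom u0 v0] by (simp add: const_term_sl2_def)
next
  have "(\<one>\<^bsub>U_h_a\<^esub> :: nat \<Rightarrow> (gen list \<Rightarrow> 'k) set) 0 = \<one>\<^bsub>U_a\<^esub>" by (simp add: U_h_a_def series_ring_def)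
  then show "const_term_sl2 (\<one>\<^bsub>U_h_a\<^esub> :: nat \<Rightarrow> (gen list \<Rightarrow> 'k) set) = \<one>\<^bsub>U_sl2\<^esub>"
    using ring_hom_one[OF str_sl2_hom] by (simp add: const_term_sl2_def)
qed

lemma Uh_op_const_term:
  assumes "colouring \<psi>"
  shows "Uh_op \<psi> n u (\<lambda>m. v) 0 = alg_act_cl n (rep (u 0)) v"
  by (simp add: Uh_op_def ser_op_def rep_def fa_op_const_term[OF assms] fun_eq_iff)

lemma ann_const_term_annihilates_cl:
  assumes col: "colouring \<psi>" and u: "u \<in> ann \<psi>"
  shows "rep (u 0) \<in> word_rep.annihilator (act_cl n) Fin_cl"
proof -
  have "rep (u 0) \<in> carrier free_alg"
    using u rep_in(2) by (auto simp: ann_def carrier_U_h_a)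
  moreover have "alg_act_cl n (rep (u 0)) v = (\<lambda>i. 0)" if v: "v \<in> Fin_cl" for v
  proof -
    have "(\<lambda>m::nat. v) \<in> Vh_carrier" using v by (simp add: Vh_carrier_def Fin_cl_def)
    then have "Uh_op \<psi> n u (\<lambda>m. v) = (\<lambda>m k. 0)" using u by (simp add: ann_def)
    then show ?thesis using Uh_op_const_term[OF col, of n u v] by simp
  qed
  ultimately show ?thesis by (simp add: word_rep.annihilator_def[OF word_rep_cl])
qed

lemma const_term_sl2_ann:
  fixes \<psi> :: "nat \<Rightarrow> int \<Rightarrow> 'k::field_char_0 fps"
  assumes col: "colouring \<psi>" and u: "u \<in> ann \<psi>"
  shows "const_term_sl2 u = \<zero>\<^bsub>U_sl2\<^esub>"
proof -
  have u0: "u 0 \<in> carrier U_a" using u by (simp add: ann_def carrier_U_h_a)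
  have f: "rep (u 0) \<in> carrier free_alg" "u 0 = ideal_a +>\<^bsub>free_alg\<^esub> rep (u 0)"
    using U_a_coset_repr[OF u0 rep_in(1)[OF u0]] by auto
  have "rep (u 0) \<in> ideal_sl2"
    using annihilating_cl_imp_ideal_sl2[OF f(1) ann_const_term_annihilates_cl[OF col u]] .
  then have "ideal_sl2 +>\<^bsub>free_alg\<^esub> rep (u 0) = \<zero>\<^bsub>U_sl2\<^esub>"
    using sl2_cls_ideal by (simp add: sl2_cls_def)
  then show ?thesis
    using str_sl2_rcos[OF f(1), folded f(2)] by (simp add: const_term_sl2_def)
qed

lemma ring_U_h_psi: "ring (U_h_psi \<psi>)"
  unfolding U_h_psi_def by (rule ideal.quotient_is_ring[OF ann_ideal])

lemma proj_psi_eq: "proj_psi \<psi> = (\<lambda>u. ann \<psi> +>\<^bsub>U_h_a\<^esub> u)"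
  by (simp add: proj_psi_def fun_eq_iff)

lemma proj_psi_hom: "proj_psi \<psi> \<in> ring_hom U_h_a (U_h_psi \<psi>)"
  unfolding proj_psi_eq U_h_psi_def by (rule ideal.rcos_ring_hom[OF ann_ideal])

lemma carrier_U_h_psi: "carrier (U_h_psi \<psi>) = {proj_psi \<psi> u | u. u \<in> carrier U_h_a}"
  by (simp add: U_h_psi_def carrier_Quot proj_psi_def)

definition theta_psi :: "(nat \<Rightarrow> int \<Rightarrow> 'k::field_char_0 fps) \<Rightarrow> (nat \<Rightarrow> (gen list \<Rightarrow> 'k) set) set \<Rightarrow> (gen list \<Rightarrow> 'k) set" where
  "theta_psi \<psi> X = the_elem (const_term_sl2 ` X)"

lemma theta_psi_hom:
  fixes \<psi> :: "nat \<Rightarrow> int \<Rightarrow> 'k::field_char_0 fps"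
  assumes col: "colouring \<psi>"
  shows "theta_psi \<psi> \<in> ring_hom (U_h_psi \<psi>) U_sl2"
proof -
  have "(\<lambda>X. the_elem (const_term_sl2 ` X)) \<in> ring_hom (U_h_a Quot ann \<psi>) (U_sl2 :: (gen list \<Rightarrow> 'k) set ring)"
    by (rule quot_lift_hom[OF UHA.ring_axioms ring_U_sl2 ann_ideal const_term_sl2_hom const_term_sl2_ann[OF col]])
  then show ?thesis by (simp add: theta_psi_def[abs_def] U_h_psi_def)
qed

lemma theta_psi_proj:
  fixes \<psi> :: "nat \<Rightarrow> int \<Rightarrow> 'k::field_char_0 fps"
  assumes col: "colouring \<psi>" and u: "u \<in> carrier U_h_a"
  shows "theta_psi \<psi> (proj_psi \<psi> u) = const_term_sl2 u"
  unfolding theta_psi_def proj_psi_def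
  by (rule quot_lift_eval[OF UHA.ring_axioms ring_U_sl2 ann_ideal const_term_sl2_hom const_term_sl2_ann[OF col] u])

lemma h_el_carrier: "(h_el :: nat \<Rightarrow> (gen list \<Rightarrow> 'k::field) set) \<in> carrier U_h_a"
  by (simp add: carrier_U_h_a h_el_def)

lemma h_el_mult:
  assumes x: "x \<in> carrier U_h_a"
  shows "(h_el \<otimes>\<^bsub>U_h_a\<^esub> x) m = (if m = 0 then \<zero>\<^bsub>U_a\<^esub> else x (m - 1))"
proof -
  have xc: "\<And>j. x j \<in> carrier U_a" using x by (simp add: carrier_U_h_a)
  have e: "(h_el \<otimes>\<^bsub>U_h_a\<^esub> x) m = finsum U_a (\<lambda>i. h_el i \<otimes>\<^bsub>U_a\<^esub> x (m - i)) {..m}"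
    by (simp add: U_h_a_def series_ring_def)
  show ?thesis
  proof (cases m)
    case 0 then show ?thesis using e xc by (simp add: h_el_def)
  next
    case (Suc m')
    have "(\<lambda>i. h_el i \<otimes>\<^bsub>U_a\<^esub> x (m - i)) = (\<lambda>i. if 1 = i then x (m - i) else \<zero>\<^bsub>U_a\<^esub>)"
      using xc by (auto simp: h_el_def fun_eq_iff)
    then have "finsum U_a (\<lambda>i. h_el i \<otimes>\<^bsub>U_a\<^esub> x (m - i)) {..m} = finsum U_a (\<lambda>i. if 1 = i then x (m - i) else \<zero>\<^bsub>U_a\<^esub>) {..m}"
      by simp
    also have "\<dots> = x (m - 1)" using Suc xc by (subst UA.finsum_singleton) (auto simp: Pi_def)
    finally show ?thesis using e Suc by simp
  qed
qed

lemma mult_h_el: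
  assumes x: "x \<in> carrier U_h_a"
  shows "(x \<otimes>\<^bsub>U_h_a\<^esub> h_el) m = (if m = 0 then \<zero>\<^bsub>U_a\<^esub> else x (m - 1))"
proof -
  have xc: "\<And>j. x j \<in> carrier U_a" using x by (simp add: carrier_U_h_a)
  have e: "(x \<otimes>\<^bsub>U_h_a\<^esub> h_el) m = finsum U_a (\<lambda>i. x i \<otimes>\<^bsub>U_a\<^esub> h_el (m - i)) {..m}"
    by (simp add: U_h_a_def series_ring_def)
  show ?thesis
  proof (cases m)
    case 0 then show ?thesis using e xc by (simp add: h_el_def)
  next
    case (Suc m')
    have "i \<le> m \<Longrightarrow> x i \<otimes>\<^bsub>U_a\<^esub> h_el (m - i) = (if m' = i then x i else \<zero>\<^bsub>U_a\<^esub>)" for i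
      using xc Suc by (auto simp: h_el_def)
    then have "finsum U_a (\<lambda>i. x i \<otimes>\<^bsub>U_a\<^esub> h_el (m - i)) {..m} = finsum U_a (\<lambda>i. if m' = i then x i else \<zero>\<^bsub>U_a\<^esub>) {..m}"
      using xc by (intro UA.finsum_cong) (auto simp: Pi_def)
    also have "\<dots> = x m'" using Suc xc by (subst UA.finsum_singleton) (auto simp: Pi_def)
    finally show ?thesis using e Suc by simp
  qed
qed

lemma h_el_central: "x \<in> carrier U_h_a \<Longrightarrow> h_el \<otimes>\<^bsub>U_h_a\<^esub> x = x \<otimes>\<^bsub>U_h_a\<^esub> h_el"
  by (rule ext) (simp add: h_el_mult mult_h_el)

definition const_series :: "(gen list \<Rightarrow> 'k::field) set \<Rightarrow> nat \<Rightarrow> (gen list \<Rightarrow> 'k) set" where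
  "const_series a = (\<lambda>m. if m = 0 then a else \<zero>\<^bsub>U_a\<^esub>)"

lemma const_series_carrier: "a \<in> carrier U_a \<Longrightarrow> const_series a \<in> carrier U_h_a"
  by (simp add: carrier_U_h_a const_series_def)

lemma series_eq_const_plus_h_mult:
  assumes u: "u \<in> carrier U_h_a"
  shows "u = const_series (u 0) \<oplus>\<^bsub>U_h_a\<^esub> h_el \<otimes>\<^bsub>U_h_a\<^esub> (\<lambda>m. u (Suc m))"
proof
  fix m
  have uc: "\<And>j. u j \<in> carrier U_a" using u by (simp add: carrier_U_h_a)
  have s: "(\<lambda>m. u (Suc m)) \<in> carrier U_h_a" using uc by (simp add: carrier_U_h_a)
  have "(const_series (u 0) \<oplus>\<^bsub>U_h_a\<^esub> h_el \<otimes>\<^bsub>U_h_a\<^esub> (\<lambda>m. u (Suc m))) m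
      = const_series (u 0) m \<oplus>\<^bsub>U_a\<^esub> (h_el \<otimes>\<^bsub>U_h_a\<^esub> (\<lambda>m. u (Suc m))) m"
    by (simp add: U_h_a_def series_ring_def)
  also have "\<dots> = u m" using uc by (cases m) (simp_all add: h_el_mult[OF s] const_series_def)
  finally show "u m = (const_series (u 0) \<oplus>\<^bsub>U_h_a\<^esub> h_el \<otimes>\<^bsub>U_h_a\<^esub> (\<lambda>m. u (Suc m))) m" ..
qed

lemma proj_psi_carrier: "u \<in> carrier U_h_a \<Longrightarrow> proj_psi \<psi> u \<in> carrier (U_h_psi \<psi>)"
  by (rule ring_hom_closed[OF proj_psi_hom])

lemma proj_h_el_central:
  assumes X: "X \<in> carrier (U_h_psi \<psi>)"
  shows "proj_psi \<psi> h_el \<otimes>\<^bsub>U_h_psi \<psi>\<^esub> X = X \<otimes>\<^bsub>U_h_psi \<psi>\<^esub> proj_psi \<psi> h_el"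
proof -
  obtain x where x: "x \<in> carrier U_h_a" "X = proj_psi \<psi> x" using X by (auto simp: carrier_U_h_psi)
  have "proj_psi \<psi> h_el \<otimes>\<^bsub>U_h_psi \<psi>\<^esub> X = proj_psi \<psi> (h_el \<otimes>\<^bsub>U_h_a\<^esub> x)"
    using x ring_hom_mult[OF proj_psi_hom h_el_carrier x(1)] by simp
  also have "\<dots> = proj_psi \<psi> (x \<otimes>\<^bsub>U_h_a\<^esub> h_el)" by (simp add: h_el_central[OF x(1)])
  also have "\<dots> = X \<otimes>\<^bsub>U_h_psi \<psi>\<^esub> proj_psi \<psi> h_el"
    using x ring_hom_mult[OF proj_psi_hom x(1) h_el_carrier] by simp
  finally show ?thesis .
qed

lemma ideal_hU_h_psi: "ideal (hU_h_psi \<psi>) (U_h_psi \<psi>)"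
  unfolding hU_h_psi_def
  by (rule ring.ideal_central_multiples[OF ring_U_h_psi proj_psi_carrier[OF h_el_carrier] proj_h_el_central])

lemma theta_psi_hU:
  fixes \<psi> :: "nat \<Rightarrow> int \<Rightarrow> 'k::field_char_0 fps"
  assumes col: "colouring \<psi>" and X: "X \<in> hU_h_psi \<psi>"
  shows "theta_psi \<psi> X = \<zero>\<^bsub>U_sl2\<^esub>"
proof -
  obtain y where y: "X = proj_psi \<psi> h_el \<otimes>\<^bsub>U_h_psi \<psi>\<^esub> y" "y \<in> carrier (U_h_psi \<psi>)"
    using X by (auto simp: hU_h_psi_def)
  have pc: "proj_psi \<psi> h_el \<in> carrier (U_h_psi \<psi>)" by (rule proj_psi_carrier[OF h_el_carrier])
  have "theta_psi \<psi> (proj_psi \<psi> h_el) = const_term_sl2 h_el" by (rule theta_psi_proj[OF col h_el_carrier])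
  also have "\<dots> = str_sl2 \<zero>\<^bsub>U_a\<^esub>" by (simp add: const_term_sl2_def h_el_def)
  also have "\<dots> = \<zero>\<^bsub>U_sl2\<^esub>" by (rule ring_hom_zero[OF str_sl2_hom ring_U_a ring_U_sl2])
  finally have t0: "theta_psi \<psi> (proj_psi \<psi> h_el) = \<zero>\<^bsub>U_sl2\<^esub>" .
  have "theta_psi \<psi> X = theta_psi \<psi> (proj_psi \<psi> h_el) \<otimes>\<^bsub>U_sl2\<^esub> theta_psi \<psi> y"
    using y ring_hom_mult[OF theta_psi_hom[OF col] pc y(2)] by simp
  also have "\<dots> = \<zero>\<^bsub>U_sl2\<^esub>" using t0 ring_hom_closed[OF theta_psi_hom[OF col] y(2)] by simp
  finally show ?thesis .
qed

definition phi :: "(nat \<Rightarrow> int \<Rightarrow> 'k::field_char_0 fps) \<Rightarrow> (nat \<Rightarrow> (gen list \<Rightarrow> 'k) set) set set \<Rightarrow> (gen list \<Rightarrow> 'k) set" where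
  "phi \<psi> X = the_elem (theta_psi \<psi> ` X)"

lemma phi_hom:
  fixes \<psi> :: "nat \<Rightarrow> int \<Rightarrow> 'k::field_char_0 fps"
  assumes col: "colouring \<psi>"
  shows "phi \<psi> \<in> ring_hom (U_h_psi_mod_h \<psi>) U_sl2"
proof -
  have "(\<lambda>X. the_elem (theta_psi \<psi> ` X)) \<in> ring_hom (U_h_psi \<psi> Quot hU_h_psi \<psi>) (U_sl2 :: (gen list \<Rightarrow> 'k) set ring)"
    by (rule quot_lift_hom[OF ring_U_h_psi ring_U_sl2 ideal_hU_h_psi theta_psi_hom[OF col] theta_psi_hU[OF col]])
  then show ?thesis by (simp add: phi_def[abs_def] U_h_psi_mod_h_def)
qed

lemma phi_class:
  fixes \<psi> :: "nat \<Rightarrow> int \<Rightarrow> 'k::field_char_0 fps"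
  assumes col: "colouring \<psi>" and P: "P \<in> carrier (U_h_psi \<psi>)"
  shows "phi \<psi> (hU_h_psi \<psi> +>\<^bsub>U_h_psi \<psi>\<^esub> P) = theta_psi \<psi> P"
  unfolding phi_def
  by (rule quot_lift_eval[OF ring_U_h_psi ring_U_sl2 ideal_hU_h_psi theta_psi_hom[OF col] theta_psi_hU[OF col] P])

lemma str_mod_h_const_series: "str_mod_h \<psi> a = hU_h_psi \<psi> +>\<^bsub>U_h_psi \<psi>\<^esub> proj_psi \<psi> (const_series a)"
  by (simp add: str_mod_h_def const_series_def)

lemma phi_str_mod_h:
  fixes \<psi> :: "nat \<Rightarrow> int \<Rightarrow> 'k::field_char_0 fps"
  assumes col: "colouring \<psi>" and a: "a \<in> carrier U_a"
  shows "phi \<psi> (str_mod_h \<psi> a) = str_sl2 a"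
proof -
  have c: "const_series a \<in> carrier U_h_a" by (rule const_series_carrier[OF a])
  have "phi \<psi> (str_mod_h \<psi> a) = theta_psi \<psi> (proj_psi \<psi> (const_series a))"
    unfolding str_mod_h_const_series by (rule phi_class[OF col proj_psi_carrier[OF c]])
  also have "\<dots> = const_term_sl2 (const_series a)" by (rule theta_psi_proj[OF col c])
  also have "\<dots> = str_sl2 a" by (simp add: const_term_sl2_def const_series_def)
  finally show ?thesis .
qed

lemma carrier_U_h_psi_mod_h:
  "carrier (U_h_psi_mod_h \<psi>) = {hU_h_psi \<psi> +>\<^bsub>U_h_psi \<psi>\<^esub> proj_psi \<psi> u | u. u \<in> carrier U_h_a}"
  by (auto simp: U_h_psi_mod_h_def carrier_Quot carrier_U_h_psi)

lemma U_h_psi_mod_h_class_eq_str: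
  assumes u: "u \<in> carrier U_h_a"
  shows "hU_h_psi \<psi> +>\<^bsub>U_h_psi \<psi>\<^esub> proj_psi \<psi> u = str_mod_h \<psi> (u 0)"
proof -
  interpret I: ideal "hU_h_psi \<psi>" "U_h_psi \<psi>" by (rule ideal_hU_h_psi)
  let ?s = "\<lambda>m. u (Suc m)"
  have s: "?s \<in> carrier U_h_a" using u by (simp add: carrier_U_h_a)
  have c: "const_series (u 0) \<in> carrier U_h_a"
    using u by (intro const_series_carrier) (simp add: carrier_U_h_a)
  have "proj_psi \<psi> u = proj_psi \<psi> (const_series (u 0) \<oplus>\<^bsub>U_h_a\<^esub> h_el \<otimes>\<^bsub>U_h_a\<^esub> ?s)"
    by (subst series_eq_const_plus_h_mult[OF u]) (rule refl)
  also have "\<dots> = proj_psi \<psi> (const_series (u 0)) \<oplus>\<^bsub>U_h_psi \<psi>\<^esub> proj_psi \<psi> h_el \<otimes>\<^bsub>U_h_psi \<psi>\<^esub> proj_psi \<psi> ?s"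
    using ring_hom_add[OF proj_psi_hom c UHA.m_closed[OF h_el_carrier s]]
      ring_hom_mult[OF proj_psi_hom h_el_carrier s] by simp
  finally have "proj_psi \<psi> u = proj_psi \<psi> (const_series (u 0)) \<oplus>\<^bsub>U_h_psi \<psi>\<^esub> proj_psi \<psi> h_el \<otimes>\<^bsub>U_h_psi \<psi>\<^esub> proj_psi \<psi> ?s" .
  moreover have "proj_psi \<psi> h_el \<otimes>\<^bsub>U_h_psi \<psi>\<^esub> proj_psi \<psi> ?s \<in> hU_h_psi \<psi>"
    unfolding hU_h_psi_def using proj_psi_carrier[OF s] by blast
  ultimately show ?thesis
    using I.a_rcos_add_mem proj_psi_carrier[OF c] by (simp add: str_mod_h_const_series)
qed

lemma carrier_U_h_psi_mod_h_eq_image: "carrier (U_h_psi_mod_h \<psi>) = str_mod_h \<psi> ` carrier U_a"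
proof
  show "carrier (U_h_psi_mod_h \<psi>) \<subseteq> str_mod_h \<psi> ` carrier U_a"
    by (auto simp: carrier_U_h_psi_mod_h U_h_psi_mod_h_class_eq_str carrier_U_h_a)
  show "str_mod_h \<psi> ` carrier U_a \<subseteq> carrier (U_h_psi_mod_h \<psi>)"
    by (auto simp: carrier_U_h_psi_mod_h str_mod_h_const_series intro: const_series_carrier)
qed

lemma str_sl2_surj: "str_sl2 ` carrier U_a = carrier U_sl2"
  by (force simp: carrier_U_a carrier_U_sl2 str_sl2_rcos)

lemma a_alg_hom_unique:
  assumes gen: "carrier A = sA ` carrier U_a"
    and "a_alg_hom A sA B sB \<phi>" "a_alg_hom A sA B sB \<phi>'" "x \<in> carrier A"
  shows "\<phi>' x = \<phi> x"
  using assms unfolding a_alg_hom_def gen by auto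

lemma a_alg_hom_image:
  assumes gen: "carrier A = sA ` carrier U_a" and "a_alg_hom A sA B sB \<phi>"
  shows "\<phi> ` carrier A = sB ` carrier U_a"
  using assms unfolding a_alg_hom_def gen by (auto simp: image_comp)

theorem mainTheorem4:
  fixes \<psi> :: "nat \<Rightarrow> int \<Rightarrow> 'k::field_char_0 fps"
  assumes "colouring \<psi>"
  shows "\<exists>\<phi>. a_alg_hom (U_h_psi_mod_h \<psi>) (str_mod_h \<psi>) U_sl2 str_sl2 \<phi>
           \<and> (\<forall>\<phi>'. a_alg_hom (U_h_psi_mod_h \<psi>) (str_mod_h \<psi>) U_sl2 str_sl2 \<phi>'
                   \<longrightarrow> (\<forall>x\<in>carrier (U_h_psi_mod_h \<psi>). \<phi>' x = \<phi> x))
           \<and> \<phi> ` carrier (U_h_psi_mod_h \<psi>) = carrier U_sl2"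
proof (intro exI conjI allI impI ballI)
  note gen = carrier_U_h_psi_mod_h_eq_image[of \<psi>]
  show hom: "a_alg_hom (U_h_psi_mod_h \<psi>) (str_mod_h \<psi>) U_sl2 str_sl2 (phi \<psi>)"
    unfolding a_alg_hom_def using phi_hom[OF assms] phi_str_mod_h[OF assms] by blast
  show "\<phi>' x = phi \<psi> x"
    if "a_alg_hom (U_h_psi_mod_h \<psi>) (str_mod_h \<psi>) U_sl2 str_sl2 \<phi>'"
      and "x \<in> carrier (U_h_psi_mod_h \<psi>)" for \<phi>' x
    using a_alg_hom_unique[OF gen hom that] .
  show "phi \<psi> ` carrier (U_h_psi_mod_h \<psi>) = carrier U_sl2"
    using a_alg_hom_image[OF gen hom] str_sl2_surj by simp
qed

end
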